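(* Let $\Gamma\subset PSL(2,\mathbb{R})$ be a cocompact lattice with $S=\mathbb{D}/\Gamma$ a compact Riemann surface, and let $(M,\mathcal{F})$, $S_1$, $S_2$ be as described in the context. Then the support of any harmonic measure for $(M,\mathcal{F})$ is contained in $S_1\cup S_2$.
   Context: $PSL(2,\mathbb{R})\cong PSU(1,1)$ acts on $\mathbb{D}$ and on $S^1=\partial\mathbb{D}$ by Möbius maps. Identify $S^1\times(0,2\pi)$ with the space of arcs via $(\zeta,\theta)\mapsto\{\zeta e^{it\theta}:0\le t\le1\}$; $g\in PSL(2,\mathbb{R})$ acts by sending the arc $I$ to the arc $g(I)$ (starting point $g(\zeta)$, angular length that of $g(I)$), and this action extends continuously to $X_0=S^1\times[0,2\pi]$ by $g(\zeta,0)=(g(\zeta),0)$, $g(\zeta,2\pi)=(g(\zeta),2\pi)$. Let $X_1\cong S^2$ be obtained from $X_0$ by collapsing each of the circles $S^1\times\{0\}$ and $S^1\times\{2\pi\}$ to a point (the poles); the action descends to $X_1$. Let $M=(\mathbb{D}\times X_1)/\Gamma$, where $\gamma$ acts by $(z,x)\mapsto(\gamma^{-1}z,\gamma^{-1}x)$, foliated by the images $\mathcal{F}$ of $\mathbb{D}\times\{x\}$ with the hyperbolic metric; $S_1,S_2$ are the compact leaves that are images of $\mathbb{D}\times\{\text{pole}\}$. A harmonic measure is a finite positive Borel measure $m$ on $M$ with $\int_M\Delta h\,dm=0$ for every continuous function $h$ smooth along leaves (leafwise derivatives continuous on $M$), $\Delta$ the leafwise Laplacian. *)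

theory Defs
  imports "HOL-Analysis.Analysis"
begin

text \<open>An element of SU(1,1) is represented by a pair (a,b) with |a|^2-|b|^2=1, standing
for the matrix [[a,b],[cnj b, cnj a]]; it acts on the disc and the circle by the Moebius
map below.  A subgroup of PSU(1,1) is represented by its full preimage in SU(1,1).\<close>

definition su11 :: "(complex \<times> complex) set" where
  "su11 = {(a,b). (cmod a)^2 - (cmod b)^2 = 1}"

definition mob :: "complex \<times> complex \<Rightarrow> complex \<Rightarrow> complex" where
  "mob g z = (fst g * z + snd g) / (cnj (snd g) * z + cnj (fst g))"

definition gmul :: "complex \<times> complex \<Rightarrow> complex \<times> complex \<Rightarrow> complex \<times> complex" where
  "gmul g h = (fst g * fst h + snd g * cnj (snd h), fst g * snd h + snd g * cnj (fst h))"

definition ginv :: "complex \<times> complex \<Rightarrow> complex \<times> complex" where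
  "ginv g = (cnj (fst g), - snd g)"

definition disc :: "complex set" where
  "disc = ball 0 1"

text \<open>Gamma is a cocompact lattice with D/Gamma a compact Riemann surface: a discrete
subgroup of PSU(1,1) acting freely on the disc with compact quotient.\<close>

definition cocompact_surface_group :: "(complex \<times> complex) set \<Rightarrow> bool" where
  "cocompact_surface_group G \<longleftrightarrow>
     G \<subseteq> su11 \<and> (1,0) \<in> G \<and> (-1,0) \<in> G \<and>
     (\<forall>g\<in>G. \<forall>h\<in>G. gmul g h \<in> G) \<and> (\<forall>g\<in>G. ginv g \<in> G) \<and>
     (\<forall>g\<in>G. \<exists>e>0. \<forall>h\<in>G. dist h g < e \<longrightarrow> h = g) \<and>
     (\<forall>g\<in>G. g \<notin> {(1,0), (-1,0)} \<longrightarrow> (\<forall>z\<in>disc. mob g z \<noteq> z)) \<and>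
     (\<exists>K. compact K \<and> K \<subseteq> disc \<and> (\<Union>g\<in>G. mob g ` K) = disc)"

section \<open>The space of arcs X1, realised as the unit sphere in C x R\<close>

definition X1 :: "(complex \<times> real) set" where
  "X1 = {(w,t). (cmod w)^2 + t^2 = 1}"

text \<open>The arc (zeta,theta), 0<theta<2pi, corresponds to the point
(sin(theta/2) zeta, cos(theta/2)); theta=0 and theta=2pi collapse to the poles (0,1), (0,-1).\<close>

definition arcpt :: "complex \<Rightarrow> real \<Rightarrow> complex \<times> real" where
  "arcpt \<zeta> \<theta> = (of_real (sin (\<theta>/2)) * \<zeta>, cos (\<theta>/2))"

definition arcset :: "complex \<Rightarrow> real \<Rightarrow> complex set" where
  "arcset \<zeta> \<theta> = {\<zeta> * cis (t * \<theta>) | t. t \<in> {0..1}}"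

definition pole1 :: "complex \<times> real" where "pole1 = (0, 1)"
definition pole2 :: "complex \<times> real" where "pole2 = (0, -1)"

definition arcact :: "complex \<times> complex \<Rightarrow> complex \<times> real \<Rightarrow> complex \<times> real" where
  "arcact g x =
     (if x = pole1 \<or> x = pole2 then x
      else (let \<zeta> = fst x / of_real (cmod (fst x)); \<theta> = 2 * arccos (snd x) in
        (THE y. \<exists>\<zeta>' \<theta>'. cmod \<zeta>' = 1 \<and> 0 < \<theta>' \<and> \<theta>' < 2 * pi \<and>
            arcset \<zeta>' \<theta>' = mob g ` arcset \<zeta> \<theta> \<and> y = arcpt \<zeta>' \<theta>')))"

definition Ytot :: "(complex \<times> (complex \<times> real)) set" where
  "Ytot = disc \<times> X1"

definition gact :: "complex \<times> complex \<Rightarrow> complex \<times> (complex \<times> real) \<Rightarrow> complex \<times> (complex \<times> real)" where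
  "gact g p = (mob (ginv g) (fst p), arcact (ginv g) (snd p))"

definition Mproj :: "(complex \<times> complex) set \<Rightarrow> complex \<times> (complex \<times> real)
                     \<Rightarrow> (complex \<times> (complex \<times> real)) set" where
  "Mproj G p = {q. \<exists>g\<in>G. q = gact g p}"

definition Mspace :: "(complex \<times> complex) set \<Rightarrow> (complex \<times> (complex \<times> real)) set set" where
  "Mspace G = Mproj G ` Ytot"

definition Mtop :: "(complex \<times> complex) set \<Rightarrow> (complex \<times> (complex \<times> real)) set topology" where
  "Mtop G = topology (\<lambda>U. U \<subseteq> Mspace G \<and> openin (top_of_set Ytot) (\<Union>U))"

definition leafS1 :: "(complex \<times> complex) set \<Rightarrow> (complex \<times> (complex \<times> real)) set set" where
  "leafS1 G = Mproj G ` (disc \<times> {pole1})"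

definition leafS2 :: "(complex \<times> complex) set \<Rightarrow> (complex \<times> (complex \<times> real)) set set" where
  "leafS2 G = Mproj G ` (disc \<times> {pole2})"

definition ldir :: "bool \<Rightarrow> complex" where
  "ldir b = (if b then 1 else \<i>)"

primrec ldiff :: "bool list \<Rightarrow> (complex \<times> 'x \<Rightarrow> real) \<Rightarrow> complex \<times> 'x \<Rightarrow> real" where
  "ldiff [] F = F"
| "ldiff (b # ws) F = (\<lambda>p. deriv (\<lambda>t::real. ldiff ws F (fst p + ldir b * of_real t, snd p)) 0)"

definition leaf_smooth :: "(complex \<times> (complex \<times> real) \<Rightarrow> real) \<Rightarrow> bool" where
  "leaf_smooth F \<longleftrightarrow>
     (\<forall>ws. continuous_on Ytot (ldiff ws F) \<and>
        (\<forall>b. \<forall>p\<in>Ytot. (\<lambda>t::real. ldiff ws F (fst p + ldir b * of_real t, snd p)) differentiable (at 0)))"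

text \<open>Laplacian of the hyperbolic metric 4|dz|^2/(1-|z|^2)^2 along the leaf.\<close>

definition hlap :: "(complex \<times> (complex \<times> real) \<Rightarrow> real) \<Rightarrow> complex \<times> (complex \<times> real) \<Rightarrow> real" where
  "hlap F p = ((1 - (cmod (fst p))^2)^2 / 4) * (ldiff [True, True] F p + ldiff [False, False] F p)"

definition lapM :: "(complex \<times> complex) set \<Rightarrow> ((complex \<times> (complex \<times> real)) set \<Rightarrow> real)
                    \<Rightarrow> (complex \<times> (complex \<times> real)) set \<Rightarrow> real" where
  "lapM G h c = hlap (h \<circ> Mproj G) (SOME p. p \<in> c \<inter> Ytot)"

definition harmonic_measure :: "(complex \<times> complex) set \<Rightarrow> (complex \<times> (complex \<times> real)) set measure \<Rightarrow> bool" where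
  "harmonic_measure G m \<longleftrightarrow>
     finite_measure m \<and> space m = Mspace G \<and>
     sets m = sigma_sets (Mspace G) {U. openin (Mtop G) U} \<and>
     (\<forall>h. continuous_map (Mtop G) euclideanreal h \<and> leaf_smooth (h \<circ> Mproj G)
          \<longrightarrow> integral\<^sup>L m (lapM G h) = 0)"

definition msupport :: "(complex \<times> complex) set \<Rightarrow> (complex \<times> (complex \<times> real)) set measure
                        \<Rightarrow> (complex \<times> (complex \<times> real)) set set" where
  "msupport G m = {c \<in> Mspace G. \<forall>U. openin (Mtop G) U \<and> c \<in> U \<longrightarrow> emeasure m U > 0}"

end

theory Submission
  imports Defs
begin

text \<open>Let \<open>u(z, x)\<close> be the harmonic measure at \<open>z \<in> D\<close> of the arc \<open>x\<close>, extended by the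
  constants 0 and 1 at the two poles (the degenerate arcs). Harmonic measure is invariant under
  Moebius maps, so \<open>u\<close> is invariant under the diagonal action of SU(1,1) and descends to a
  continuous function on M, harmonic along the leaves as the real part of a leafwise holomorphic
  function. Hence \<open>u\<^sup>2\<close> is leafwise smooth with Laplacian \<open>2 |\<nabla>u|\<^sup>2 \<ge> 0\<close>, and \<open>\<nabla>u\<close>
  vanishes exactly on \<open>S\<^sub>1\<close> and \<open>S\<^sub>2\<close>. Integrating against a harmonic measure \<open>m\<close> gives
  \<open>\<integral> |\<nabla>u|\<^sup>2 dm = 0\<close>, so \<open>m\<close> gives no mass to the open set \<open>M - (S\<^sub>1 \<union> S\<^sub>2)\<close>.\<close>

section \<open>Moebius maps of SU(1,1)\<close>

definition mob_denom :: "complex \<times> complex \<Rightarrow> complex \<Rightarrow> complex" where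
  "mob_denom g w = cnj (snd g) * w + cnj (fst g)"

lemma su11_det: "g \<in> su11 \<Longrightarrow> fst g * cnj (fst g) - snd g * cnj (snd g) = 1"
proof -
  assume "g \<in> su11"
  then have "(cmod (fst g))^2 - (cmod (snd g))^2 = 1" by (auto simp: su11_def)
  then have "complex_of_real ((cmod (fst g))^2 - (cmod (snd g))^2) = 1" by simp
  then show ?thesis by (simp add: complex_norm_square[symmetric])
qed

lemma su11_norm_less: "g \<in> su11 \<Longrightarrow> cmod (snd g) < cmod (fst g)"
  unfolding su11_def
  by (metis (mono_tags, lifting) case_prod_unfold diff_gt_0_iff_gt mem_Collect_eq norm_ge_zero
      power_less_imp_less_base zero_less_one)

lemma mob_denom_nonzero:
  assumes "g \<in> su11" "cmod w \<le> 1"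
  shows "mob_denom g w \<noteq> 0"
proof
  assume "mob_denom g w = 0"
  then have "cmod (cnj (fst g)) = cmod (cnj (snd g) * w)"
    unfolding mob_denom_def by (metis add.commute add_eq_0_iff norm_minus_cancel)
  also have "\<dots> \<le> cmod (snd g)" using assms(2) by (simp add: norm_mult mult_left_le)
  finally show False using su11_norm_less[OF assms(1)] by simp
qed

lemma mob_eq_divide_denom: "mob g w = (fst g * w + snd g) / mob_denom g w"
  by (simp add: mob_def mob_denom_def)

lemma mob_diff:
  assumes "g \<in> su11" "mob_denom g w1 \<noteq> 0" "mob_denom g w2 \<noteq> 0"
  shows "mob g w1 - mob g w2 = (w1 - w2) / (mob_denom g w1 * mob_denom g w2)"
proof -
  obtain a b where g: "g = (a, b)" by force
  have det: "a * cnj a - b * cnj b = 1" using su11_det[OF assms(1)] g by simp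
  have "(a*w1 + b) * (cnj b * w2 + cnj a) - (a*w2 + b) * (cnj b * w1 + cnj a)
      = (a * cnj a - b * cnj b) * (w1 - w2)"
    by algebra
  then show ?thesis
    using assms(2,3) det unfolding mob_eq_divide_denom g by (simp add: mob_denom_def field_simps)
qed

lemma one_minus_cnj_mob_mult_mob:
  assumes "g \<in> su11" "mob_denom g z \<noteq> 0" "mob_denom g w \<noteq> 0"
  shows "1 - cnj (mob g z) * mob g w = (1 - cnj z * w) / (cnj (mob_denom g z) * mob_denom g w)"
proof -
  obtain a b where g: "g = (a, b)" by force
  have det: "a * cnj a - b * cnj b = 1" using su11_det[OF assms(1)] g by simp
  have "cnj (cnj b * z + cnj a) * (cnj b * w + cnj a) - cnj (a * z + b) * (a * w + b)
      = (a * cnj a - b * cnj b) * (1 - cnj z * w)"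
    by (simp add: algebra_simps)
  moreover have "1 - cnj (mob g z) * mob g w
      = (cnj (mob_denom g z) * mob_denom g w - cnj (fst g * z + snd g) * (fst g * w + snd g))
        / (cnj (mob_denom g z) * mob_denom g w)"
    unfolding mob_eq_divide_denom using assms(2,3) by (simp add: field_simps)
  ultimately show ?thesis using det unfolding g mob_denom_def by simp
qed

lemma one_minus_norm_mob_squared:
  assumes "g \<in> su11" "mob_denom g z \<noteq> 0"
  shows "1 - (cmod (mob g z))^2 = (1 - (cmod z)^2) / (cmod (mob_denom g z))^2"
proof -
  have sq: "complex_of_real ((cmod w)^2) = cnj w * w" for w
    using complex_norm_square[of w] by (simp only: mult.commute)
  have "complex_of_real (1 - (cmod (mob g z))^2)
      = complex_of_real ((1 - (cmod z)^2) / (cmod (mob_denom g z))^2)"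
    by (simp only: of_real_diff of_real_divide of_real_1 sq
        one_minus_cnj_mob_mult_mob[OF assms assms(2)])
  then show ?thesis by (simp only: of_real_eq_iff)
qed

lemma norm_mob_eq_1: "g \<in> su11 \<Longrightarrow> cmod w = 1 \<Longrightarrow> cmod (mob g w) = 1"
  using one_minus_norm_mob_squared[of g w] mob_denom_nonzero[of g w]
  by (simp add: power2_eq_1_iff) (smt (verit) norm_ge_zero)

lemma norm_mob_less_1:
  assumes "g \<in> su11" "cmod z < 1"
  shows "cmod (mob g z) < 1"
proof -
  have "mob_denom g z \<noteq> 0" using mob_denom_nonzero assms by simp
  moreover have "(cmod z)^2 < 1" using assms(2) by (simp add: abs_square_less_1)
  ultimately have "0 < 1 - (cmod (mob g z))^2" using one_minus_norm_mob_squared[OF assms(1)] by simp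
  then show ?thesis by (simp add: abs_square_less_1)
qed

lemma mob_on_circle:
  assumes "cmod w = 1"
  shows "mob g w = w * cnj (mob_denom g w) / mob_denom g w"
proof -
  have "w * cnj w = 1"
    using assms by (metis complex_norm_square mult.commute of_real_1 power_one)
  then have "w * cnj (mob_denom g w) = fst g * w + snd g"
    unfolding mob_denom_def by (simp add: algebra_simps)
  then show ?thesis by (simp add: mob_eq_divide_denom)
qed

lemma ginv_su11: "g \<in> su11 \<Longrightarrow> ginv g \<in> su11"
  by (simp add: su11_def ginv_def case_prod_unfold)

lemma gmul_su11:
  assumes "g \<in> su11" "h \<in> su11"
  shows "gmul g h \<in> su11"
proof -
  obtain a b c d where g: "g = (a, b)" and h: "h = (c, d)" by force
  have "(a*c + b * cnj d) * cnj (a*c + b * cnj d) - (a*d + b * cnj c) * cnj (a*d + b * cnj c)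
      = (a * cnj a - b * cnj b) * (c * cnj c - d * cnj d)"
    by (simp add: algebra_simps)
  then have "complex_of_real ((cmod (a*c + b * cnj d))^2 - (cmod (a*d + b * cnj c))^2) = 1"
    unfolding of_real_diff complex_norm_square using su11_det[OF assms(1)] su11_det[OF assms(2)] g h
    by simp
  then show ?thesis by (simp only: of_real_eq_1_iff) (simp add: su11_def gmul_def g h)
qed

lemma mob_gmul:
  assumes "mob_denom h w \<noteq> 0"
  shows "mob (gmul g h) w = mob g (mob h w)"
proof -
  have "(a * (N/D) + b) / (c * (N/D) + d) = (a*N + b*D) / (c*N + d*D)" if "D \<noteq> 0"
    for a b c d N D :: complex
  proof -
    have "a * (N/D) + b = (a*N + b*D) / D" "c * (N/D) + d = (c*N + d*D) / D"
      using that by (simp_all add: field_simps)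
    then show ?thesis using that by simp
  qed
  then have "mob g (mob h w) = (fst g * (fst h * w + snd h) + snd g * mob_denom h w)
      / (cnj (snd g) * (fst h * w + snd h) + cnj (fst g) * mob_denom h w)"
    unfolding mob_def[of g] mob_eq_divide_denom[of h] using assms by simp
  then show ?thesis unfolding mob_def gmul_def mob_denom_def by (simp add: algebra_simps)
qed

lemma mob_one [simp]: "mob (1, 0) w = w"
  by (simp add: mob_def)

lemma gmul_ginv: "g \<in> su11 \<Longrightarrow> gmul g (ginv g) = (1, 0)"
  using su11_det[of g] by (simp add: gmul_def ginv_def algebra_simps)

lemma ginv_gmul: "g \<in> su11 \<Longrightarrow> gmul (ginv g) g = (1, 0)"
  using su11_det[of g] by (simp add: gmul_def ginv_def algebra_simps)

lemma ginv_ginv [simp]: "ginv (ginv g) = g"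
  by (simp add: ginv_def)

lemma ginv_gmul_distrib: "ginv (gmul g h) = gmul (ginv h) (ginv g)"
  by (simp add: gmul_def ginv_def algebra_simps)

lemma mob_ginv_mob:
  assumes "g \<in> su11" "cmod w \<le> 1"
  shows "mob (ginv g) (mob g w) = w"
  using mob_gmul[of g w "ginv g"] mob_denom_nonzero[OF assms] ginv_gmul[OF assms(1)] by simp

lemma mob_mob_ginv: "g \<in> su11 \<Longrightarrow> cmod w \<le> 1 \<Longrightarrow> mob g (mob (ginv g) w) = w"
  using mob_ginv_mob[OF ginv_su11] by simp

lemma mob_inj_on_cball: "g \<in> su11 \<Longrightarrow> cmod w1 \<le> 1 \<Longrightarrow> cmod w2 \<le> 1 \<Longrightarrow> mob g w1 = mob g w2 \<Longrightarrow> w1 = w2"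
  by (metis mob_ginv_mob)


section \<open>Arcs of the circle\<close>

lemma cis_inj_on_0_2pi:
  assumes "cis x = cis y" "0 \<le> x" "x < 2*pi" "0 \<le> y" "y < 2*pi"
  shows "x = y"
proof -
  have "cis (x - y) = 1" using assms(1) by (simp add: cis_divide[symmetric])
  then have "cos (x - y) = 1" by (simp add: complex_eq_iff)
  then obtain k :: int where k: "x - y = 2*pi*k"
    using cos_one_2pi_int by (metis mult.assoc mult.commute)
  have "\<bar>x - y\<bar> < 2*pi" using assms by auto
  then have "2*pi*\<bar>real_of_int k\<bar> < 2*pi*1" using k by (simp add: abs_mult)
  then have "\<bar>real_of_int k\<bar> < 1" using pi_gt_zero by (simp only: mult_less_cancel_left_pos)
  then have "k = 0" by linarith
  then show ?thesis using k by simp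
qed

definition angle2pi :: "complex \<Rightarrow> real" where
  "angle2pi y = (if 0 \<le> Arg y then Arg y else Arg y + 2*pi)"

lemma angle2pi:
  assumes "cmod y = 1"
  shows "cis (angle2pi y) = y" "0 \<le> angle2pi y" "angle2pi y < 2*pi"
proof -
  have "y \<noteq> 0" using assms by auto
  then have "cis (Arg y) = y" using cis_Arg[of y] assms by (simp add: sgn_div_norm)
  moreover have "cis (Arg y + 2*pi) = cis (Arg y)" by (simp add: complex_eq_iff)
  ultimately show "cis (angle2pi y) = y" unfolding angle2pi_def by simp
  show "0 \<le> angle2pi y" "angle2pi y < 2*pi"
    using Arg_bounded[of y] pi_gt_zero unfolding angle2pi_def by auto
qed

lemma angle2pi_pos: "cmod y = 1 \<Longrightarrow> y \<noteq> 1 \<Longrightarrow> 0 < angle2pi y"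
  using angle2pi[of y] by (metis cis_zero less_eq_real_def)

lemma angle2pi_cis: "0 \<le> t \<Longrightarrow> t < 2*pi \<Longrightarrow> angle2pi (cis t) = t"
  using angle2pi[of "cis t"] cis_inj_on_0_2pi[of "angle2pi (cis t)" t] by simp

lemma arcset_eq_angles:
  assumes "0 < \<theta>"
  shows "arcset \<zeta> \<theta> = {\<zeta> * cis t | t. 0 \<le> t \<and> t \<le> \<theta>}"
proof -
  have "\<zeta> * cis (s*\<theta>) \<in> {\<zeta> * cis t | t. 0 \<le> t \<and> t \<le> \<theta>}" if "s \<in> {0..1}" for s
    using that assms by (auto intro!: exI[of _ "s*\<theta>"] simp: mult_le_cancel_right1)
  moreover have "\<zeta> * cis t \<in> arcset \<zeta> \<theta>" if "0 \<le> t" "t \<le> \<theta>" for t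
    using that assms unfolding arcset_def by (auto intro!: exI[of _ "t/\<theta>"])
  ultimately show ?thesis unfolding arcset_def by blast
qed

lemma mult_cis_not_in_arcset:
  assumes "cmod \<zeta> = 1" "0 < \<theta>" "\<theta> < \<tau>" "\<tau> < 2*pi"
  shows "\<zeta> * cis \<tau> \<notin> arcset \<zeta> \<theta>"
proof
  assume "\<zeta> * cis \<tau> \<in> arcset \<zeta> \<theta>"
  then obtain t where t: "0 \<le> t" "t \<le> \<theta>" "\<zeta> * cis \<tau> = \<zeta> * cis t"
    using arcset_eq_angles assms by auto
  then have "\<tau> = t" using cis_inj_on_0_2pi[of \<tau> t] assms by auto
  then show False using t assms by simp
qed

lemma arcset_inj:
  assumes u: "cmod \<zeta>1 = 1" "cmod \<zeta>2 = 1"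
    and th: "0 < \<theta>1" "\<theta>1 < 2*pi" "0 < \<theta>2" "\<theta>2 < 2*pi"
    and eq: "arcset \<zeta>1 \<theta>1 = arcset \<zeta>2 \<theta>2"
  shows "\<zeta>1 = \<zeta>2 \<and> \<theta>1 = \<theta>2"
proof -
  have "\<zeta>1 \<in> arcset \<zeta>1 \<theta>1" "\<zeta>2 \<in> arcset \<zeta>2 \<theta>2"
    using arcset_eq_angles th by (auto intro!: exI[of _ 0])
  then have "\<zeta>2 \<in> arcset \<zeta>1 \<theta>1" "\<zeta>1 \<in> arcset \<zeta>2 \<theta>2" using eq by auto
  then obtain t1 t2 where t1: "0 \<le> t1" "t1 \<le> \<theta>1" "\<zeta>2 = \<zeta>1 * cis t1"
    and t2: "0 \<le> t2" "t2 \<le> \<theta>2" "\<zeta>1 = \<zeta>2 * cis t2"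
    unfolding arcset_eq_angles[OF th(1)] arcset_eq_angles[OF th(3)] by blast
  show ?thesis
  proof (cases "t1 = 0")
    case True
    then have z: "\<zeta>1 = \<zeta>2" using t1 by simp
    have "\<zeta>1 * cis \<theta>2 \<in> arcset \<zeta>2 \<theta>2" "\<zeta>1 * cis \<theta>1 \<in> arcset \<zeta>1 \<theta>1"
      using arcset_eq_angles th z by auto
    then have "\<not> \<theta>1 < \<theta>2" "\<not> \<theta>2 < \<theta>1"
      using mult_cis_not_in_arcset[OF u(1) th(1) _ th(4)] mult_cis_not_in_arcset[OF u(2) th(3) _ th(2)]
        eq z by auto
    then show ?thesis using z by simp
  next
    case False
    \<comment> \<open>Then each arc contains the other's starting point, so the second arc also contains
      the points just beyond the end of the first.\<close>
    have "\<zeta>1 = \<zeta>1 * cis t1 * cis t2" using t1 t2 by simp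
    then have "cis t1 * cis t2 = 1" using u(1)
      by (metis mult.assoc mult_cancel_left1 norm_zero zero_neq_one)
    moreover have "cis (pi*2) = 1" by (simp add: complex_eq_iff)
    ultimately have "cis t2 = cis (2*pi - t1)" by (simp add: cis_divide[symmetric] field_simps)
    then have t12: "t2 = 2*pi - t1"
      using cis_inj_on_0_2pi[of t2 "2*pi - t1"] False t1 t2 th by auto
    define \<tau> where "\<tau> = (\<theta>1 + 2*pi)/2"
    have tau: "\<theta>1 < \<tau>" "\<tau> < 2*pi" using th by (auto simp: \<tau>_def)
    have "\<zeta>1 * cis \<tau> = \<zeta>2 * cis (\<tau> - t1)" using t1 by (simp add: cis_divide[symmetric] cis_mult)
    moreover have "0 \<le> \<tau> - t1" "\<tau> - t1 \<le> \<theta>2" using tau t1 t2 t12 by auto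
    ultimately have "\<zeta>1 * cis \<tau> \<in> arcset \<zeta>2 \<theta>2" using arcset_eq_angles th by auto
    then show ?thesis using mult_cis_not_in_arcset[OF u(1) th(1) tau] eq by simp
  qed
qed

text \<open>For unimodular \<open>a \<noteq> b\<close>, \<open>Im (cyclic_ratio a w b) > 0\<close> says that \<open>w\<close> lies strictly
  inside the counterclockwise arc from \<open>a\<close> to \<open>b\<close>; a Moebius map of SU(1,1) only divides
  the ratio by a positive real, which is why it maps arcs to arcs.\<close>

definition cyclic_ratio :: "complex \<Rightarrow> complex \<Rightarrow> complex \<Rightarrow> complex" where
  "cyclic_ratio a w b = (w - a) * (b - w) * (a - b) / (a * w * b)"

lemma cyclic_ratio_cis:
  assumes "\<zeta> \<noteq> 0"
  shows "cyclic_ratio \<zeta> (\<zeta> * cis t) (\<zeta> * cis \<theta>)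
    = \<i> * of_real (8 * sin (t/2) * sin ((\<theta> - t)/2) * sin (\<theta>/2))"
proof -
  define A B where "A = cis (t/2)" and "B = cis (\<theta>/2)"
  have A0: "A \<noteq> 0" "B \<noteq> 0" by (auto simp: A_def B_def)
  have ct: "cis t = A*A" and cth: "cis \<theta> = B*B" unfolding A_def B_def by (simp_all add: cis_mult)
  have sin_cis: "2 * \<i> * of_real (sin x) = cis x - cis (-x)" for x
    by (simp add: complex_eq_iff)
  have s1: "2 * \<i> * of_real (sin (t/2)) = A - inverse A"
    and s3: "2 * \<i> * of_real (sin (\<theta>/2)) = B - inverse B"
    unfolding A_def B_def sin_cis by (simp_all add: cis_inverse)
  have s2: "2 * \<i> * of_real (sin ((\<theta> - t)/2)) = B / A - A / B"
    unfolding A_def B_def sin_cis by (simp add: cis_divide diff_divide_distrib)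
  have "\<i> * of_real (8 * sin (t/2) * sin ((\<theta> - t)/2) * sin (\<theta>/2))
      = - ((2 * \<i> * of_real (sin (t/2))) * (2 * \<i> * of_real (sin ((\<theta> - t)/2)))
           * (2 * \<i> * of_real (sin (\<theta>/2))))"
    by (simp add: algebra_simps)
  also have "\<dots> = - ((A - inverse A) * (B / A - A / B) * (B - inverse B))"
    unfolding s1 s2 s3 ..
  also have "\<dots> = cyclic_ratio \<zeta> (\<zeta> * cis t) (\<zeta> * cis \<theta>)"
    unfolding cyclic_ratio_def ct cth using A0 assms by (simp add: field_simps)
  finally show ?thesis by simp
qed

lemma Im_cyclic_ratio_cis_pos_iff:
  assumes "\<zeta> \<noteq> 0" "0 < t" "t < 2*pi" "0 < \<theta>" "\<theta> < 2*pi"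
  shows "0 < Im (cyclic_ratio \<zeta> (\<zeta> * cis t) (\<zeta> * cis \<theta>)) \<longleftrightarrow> t < \<theta>"
proof -
  have "0 < sin (t/2)" "0 < sin (\<theta>/2)" using assms by (auto intro: sin_gt_zero)
  moreover have "0 < sin ((\<theta> - t)/2) \<longleftrightarrow> t < \<theta>"
  proof
    assume "t < \<theta>" then show "0 < sin ((\<theta> - t)/2)" using assms by (intro sin_gt_zero) auto
  next
    assume pos: "0 < sin ((\<theta> - t)/2)"
    show "t < \<theta>"
    proof (rule ccontr)
      assume "\<not> t < \<theta>"
      then have "0 \<le> sin ((t - \<theta>)/2)" using assms by (intro sin_ge_zero) auto
      then have "sin ((\<theta> - t)/2) \<le> 0"
        by (metis minus_diff_eq minus_divide_left neg_0_le_iff_le sin_minus)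
      then show False using pos by simp
    qed
  qed
  ultimately show ?thesis unfolding cyclic_ratio_cis[OF assms(1)] by (simp add: zero_less_mult_iff)
qed

lemma arcset_eq_cyclic_order:
  assumes u: "cmod \<zeta> = 1" and th: "0 < \<theta>" "\<theta> < 2*pi"
  shows "arcset \<zeta> \<theta> = {w. cmod w = 1 \<and>
    (w = \<zeta> \<or> w = \<zeta> * cis \<theta> \<or> 0 < Im (cyclic_ratio \<zeta> w (\<zeta> * cis \<theta>)))}"
proof -
  have z0: "\<zeta> \<noteq> 0" using u by auto
  note inside = Im_cyclic_ratio_cis_pos_iff[OF z0 _ _ th]
  show ?thesis
  proof (intro set_eqI iffI)
    fix w assume "w \<in> arcset \<zeta> \<theta>"
    then obtain t where t: "0 \<le> t" "t \<le> \<theta>" "w = \<zeta> * cis t" using arcset_eq_angles th by auto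
    then show "w \<in> {w. cmod w = 1 \<and> (w = \<zeta> \<or> w = \<zeta> * cis \<theta> \<or> 0 < Im (cyclic_ratio \<zeta> w (\<zeta> * cis \<theta>)))}"
      using inside[of t] u th by (cases "t = 0 \<or> t = \<theta>") (auto simp: norm_mult)
  next
    fix w assume w: "w \<in> {w. cmod w = 1 \<and> (w = \<zeta> \<or> w = \<zeta> * cis \<theta> \<or> 0 < Im (cyclic_ratio \<zeta> w (\<zeta> * cis \<theta>)))}"
    define t where "t = angle2pi (w / \<zeta>)"
    have "cmod (w / \<zeta>) = 1" using w u by (simp add: norm_divide)
    then have t: "0 \<le> t" "t < 2*pi" and wt: "w = \<zeta> * cis t"
      using angle2pi[of "w / \<zeta>"] z0 by (auto simp: t_def)
    have "t \<le> \<theta>"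
    proof (cases "t = 0")
      case False
      have "w = \<zeta> \<Longrightarrow> t = 0" using wt z0 t cis_inj_on_0_2pi[of t 0] by simp
      moreover have "w = \<zeta> * cis \<theta> \<Longrightarrow> t = \<theta>" using wt z0 t th cis_inj_on_0_2pi[of t \<theta>] by simp
      ultimately show ?thesis using w inside[of t] False t wt by force
    qed (use th in simp)
    then show "w \<in> arcset \<zeta> \<theta>" using arcset_eq_angles th t wt by auto
  qed
qed

lemma cyclic_ratio_mob:
  assumes g: "g \<in> su11" and u: "cmod a = 1" "cmod w = 1" "cmod b = 1"
  shows "cyclic_ratio (mob g a) (mob g w) (mob g b)
    = cyclic_ratio a w b / of_real ((cmod (mob_denom g a * mob_denom g w * mob_denom g b))^2)"
proof -
  define A W B where "A = mob_denom g a" and "W = mob_denom g w" and "B = mob_denom g b"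
  have D: "A \<noteq> 0" "W \<noteq> 0" "B \<noteq> 0" using mob_denom_nonzero g u by (auto simp: A_def W_def B_def)
  have "a \<noteq> 0" "w \<noteq> 0" "b \<noteq> 0" using u by auto
  have "cyclic_ratio (mob g a) (mob g w) (mob g b) = ((w - a)/(W*A)) * ((b - w)/(B*W)) * ((a - b)/(A*B))
      / ((a * cnj A/A) * (w * cnj W/W) * (b * cnj B/B))"
    unfolding cyclic_ratio_def A_def W_def B_def
    unfolding mob_diff[OF g D(2,1)[unfolded W_def A_def]] mob_diff[OF g D(3,2)[unfolded B_def W_def]]
      mob_diff[OF g D(1,3)[unfolded A_def B_def]]
    unfolding mob_on_circle[OF u(1)] mob_on_circle[OF u(2)] mob_on_circle[OF u(3)] ..
  also have "\<dots> = cyclic_ratio a w b / ((A*W*B) * (cnj A * cnj W * cnj B))"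
    using D \<open>a \<noteq> 0\<close> \<open>w \<noteq> 0\<close> \<open>b \<noteq> 0\<close> unfolding cyclic_ratio_def by (simp add: field_simps)
  also have "(A*W*B) * (cnj A * cnj W * cnj B) = of_real ((cmod (A * W * B))^2)"
    unfolding complex_norm_square by simp
  finally show ?thesis by (simp only: A_def W_def B_def)
qed

lemma Im_cyclic_ratio_mob_pos_iff:
  assumes "g \<in> su11" "cmod a = 1" "cmod w = 1" "cmod b = 1"
  shows "0 < Im (cyclic_ratio (mob g a) (mob g w) (mob g b)) \<longleftrightarrow> 0 < Im (cyclic_ratio a w b)"
proof -
  have "0 < (cmod (mob_denom g a * mob_denom g w * mob_denom g b))^2"
    using mob_denom_nonzero assms by simp
  then show ?thesis unfolding cyclic_ratio_mob[OF assms]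
    by (simp add: Im_divide_of_real zero_less_divide_iff)
qed

lemma mob_arc_endpoints:
  assumes g: "g \<in> su11" and u: "cmod \<zeta> = 1" and th: "0 < \<theta>" "\<theta> < 2*pi"
  defines "\<zeta>' \<equiv> mob g \<zeta>" and "\<theta>' \<equiv> angle2pi (mob g (\<zeta> * cis \<theta>) / mob g \<zeta>)"
  shows "cmod \<zeta>' = 1" "0 < \<theta>'" "\<theta>' < 2*pi" "\<zeta>' * cis \<theta>' = mob g (\<zeta> * cis \<theta>)"
proof -
  have ub: "cmod (\<zeta> * cis \<theta>) = 1" using u by (simp add: norm_mult)
  show u': "cmod \<zeta>' = 1" unfolding \<zeta>'_def using norm_mob_eq_1 g u by simp
  have ub': "cmod (mob g (\<zeta> * cis \<theta>)) = 1" using norm_mob_eq_1 g ub by simp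
  have "\<zeta> * cis \<theta> \<noteq> \<zeta>" using u cis_inj_on_0_2pi[of \<theta> 0] th by auto
  then have "mob g (\<zeta> * cis \<theta>) \<noteq> \<zeta>'"
    unfolding \<zeta>'_def using mob_inj_on_cball[OF g, of "\<zeta> * cis \<theta>" \<zeta>] u ub by auto
  then have q: "cmod (mob g (\<zeta> * cis \<theta>) / \<zeta>') = 1" "mob g (\<zeta> * cis \<theta>) / \<zeta>' \<noteq> 1"
    using u' ub' by (auto simp: norm_divide)
  show th': "0 < \<theta>'" "\<theta>' < 2*pi"
    unfolding \<theta>'_def \<zeta>'_def[symmetric] using angle2pi_pos[OF q] angle2pi(3)[OF q(1)] by auto
  show "\<zeta>' * cis \<theta>' = mob g (\<zeta> * cis \<theta>)"
    unfolding \<theta>'_def \<zeta>'_def[symmetric] angle2pi(1)[OF q(1)] using u' by auto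
qed

lemma mob_image_arcset:
  assumes g: "g \<in> su11" and u: "cmod \<zeta> = 1" and th: "0 < \<theta>" "\<theta> < 2*pi"
  defines "\<zeta>' \<equiv> mob g \<zeta>" and "\<theta>' \<equiv> angle2pi (mob g (\<zeta> * cis \<theta>) / mob g \<zeta>)"
  shows "mob g ` arcset \<zeta> \<theta> = arcset \<zeta>' \<theta>'"
proof -
  have ub: "cmod (\<zeta> * cis \<theta>) = 1" using u by (simp add: norm_mult)
  note ends = mob_arc_endpoints[OF g u th, folded \<zeta>'_def \<theta>'_def]
  note u' = ends(1) and th' = ends(2,3) and end' = ends(4)
  show ?thesis
  proof (intro set_eqI iffI)
    fix y assume "y \<in> mob g ` arcset \<zeta> \<theta>"
    then obtain w where w: "w \<in> arcset \<zeta> \<theta>" "y = mob g w" by auto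
    have w': "cmod w = 1" "w = \<zeta> \<or> w = \<zeta> * cis \<theta> \<or> 0 < Im (cyclic_ratio \<zeta> w (\<zeta> * cis \<theta>))"
      using w(1) arcset_eq_cyclic_order[OF u th] by auto
    have "cmod y = 1" using w norm_mob_eq_1 g w' by simp
    moreover have "y = mob g \<zeta> \<or> y = mob g (\<zeta> * cis \<theta>)
        \<or> 0 < Im (cyclic_ratio (mob g \<zeta>) y (mob g (\<zeta> * cis \<theta>)))"
      using w'(2) Im_cyclic_ratio_mob_pos_iff[OF g u w'(1) ub] unfolding w(2) by auto
    then have "y = \<zeta>' \<or> y = \<zeta>' * cis \<theta>' \<or> 0 < Im (cyclic_ratio \<zeta>' y (\<zeta>' * cis \<theta>'))"
      unfolding end' unfolding \<zeta>'_def .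
    ultimately show "y \<in> arcset \<zeta>' \<theta>'" using arcset_eq_cyclic_order[OF u' th'] by auto
  next
    fix y assume "y \<in> arcset \<zeta>' \<theta>'"
    then have y: "cmod y = 1" "y = \<zeta>' \<or> y = \<zeta>' * cis \<theta>' \<or> 0 < Im (cyclic_ratio \<zeta>' y (\<zeta>' * cis \<theta>'))"
      using arcset_eq_cyclic_order[OF u' th'] by auto
    define w where "w = mob (ginv g) y"
    have wy: "mob g w = y" and uw: "cmod w = 1"
      unfolding w_def using mob_mob_ginv norm_mob_eq_1 ginv_su11 g y by auto
    have "mob g w = mob g \<zeta> \<or> mob g w = mob g (\<zeta> * cis \<theta>)
        \<or> 0 < Im (cyclic_ratio (mob g \<zeta>) (mob g w) (mob g (\<zeta> * cis \<theta>)))"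
      using y(2) unfolding end' unfolding \<zeta>'_def wy .
    then have "w = \<zeta> \<or> w = \<zeta> * cis \<theta> \<or> 0 < Im (cyclic_ratio \<zeta> w (\<zeta> * cis \<theta>))"
      using Im_cyclic_ratio_mob_pos_iff[OF g u uw ub]
        mob_inj_on_cball[OF g, of w] uw u ub by auto
    then have "w \<in> arcset \<zeta> \<theta>" using arcset_eq_cyclic_order[OF u th] uw by auto
    then show "y \<in> mob g ` arcset \<zeta> \<theta>" using wy by auto
  qed
qed


section \<open>The action of SU(1,1) on the sphere of arcs\<close>

definition arc_start :: "complex \<times> real \<Rightarrow> complex" where
  "arc_start x = fst x / of_real (cmod (fst x))"

definition arc_angle :: "complex \<times> real \<Rightarrow> real" where
  "arc_angle x = 2 * arccos (snd x)"

definition arc_end :: "complex \<times> real \<Rightarrow> complex" where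
  "arc_end x = arc_start x * cis (arc_angle x)"

definition nonpole :: "complex \<times> real \<Rightarrow> bool" where
  "nonpole x \<longleftrightarrow> x \<in> X1 \<and> x \<noteq> pole1 \<and> x \<noteq> pole2"

lemma X1_iff: "x \<in> X1 \<longleftrightarrow> (cmod (fst x))^2 + (snd x)^2 = 1"
  by (cases x) (simp add: X1_def)

lemma X1_fst_eq_0_imp_pole: "x \<in> X1 \<Longrightarrow> fst x = 0 \<Longrightarrow> x = pole1 \<or> x = pole2"
  by (cases x) (auto simp: X1_iff pole1_def pole2_def power2_eq_1_iff)

lemma nonpole_iff: "x \<in> X1 \<Longrightarrow> nonpole x \<longleftrightarrow> fst x \<noteq> 0"
  by (metis X1_fst_eq_0_imp_pole fst_conv nonpole_def pole1_def pole2_def)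

lemma X1_cases [consumes 1, case_names nonpole pole]:
  assumes "x \<in> X1"
  obtains "nonpole x" | "fst x = 0" "x = pole1 \<or> x = pole2"
  using assms nonpole_iff X1_fst_eq_0_imp_pole by blast

lemma X1_snd_bounds:
  assumes "x \<in> X1"
  shows "-1 \<le> snd x \<and> snd x \<le> 1"
proof -
  have "(cmod (fst x))^2 + (snd x)^2 = 1" using assms by (simp add: X1_iff)
  then have "(snd x)^2 \<le> 1" using zero_le_power2[of "cmod (fst x)"] by linarith
  then show ?thesis by (simp add: abs_square_le_1 abs_le_iff)
qed

lemma nonpole_arc_data:
  assumes "nonpole x"
  shows "cmod (arc_start x) = 1" "cmod (arc_end x) = 1" "0 < arc_angle x" "arc_angle x < 2*pi"
proof -
  have x: "x \<in> X1" using assms by (simp add: nonpole_def)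
  then have "fst x \<noteq> 0" using nonpole_iff[OF x] assms by simp
  with x
  show "cmod (arc_start x) = 1" "cmod (arc_end x) = 1"
    by (simp_all add: arc_start_def arc_end_def norm_mult norm_divide)
  have "(snd x)^2 < 1" using x \<open>fst x \<noteq> 0\<close>
    by (simp add: X1_iff) (smt (verit) zero_less_norm_iff zero_less_power2)
  then have "-1 < snd x" "snd x < 1" by (auto simp: abs_square_less_1)
  then show "0 < arc_angle x" "arc_angle x < 2*pi"
    using arccos_lt_bounded by (auto simp: arc_angle_def)
qed

lemma nonpole_arcpt:
  assumes "cmod \<zeta> = 1" "0 < \<theta>" "\<theta> < 2*pi"
  shows "nonpole (arcpt \<zeta> \<theta>)" "arc_start (arcpt \<zeta> \<theta>) = \<zeta>" "arc_angle (arcpt \<zeta> \<theta>) = \<theta>"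
proof -
  have sp: "0 < sin (\<theta>/2)" using assms by (intro sin_gt_zero) auto
  have "arcpt \<zeta> \<theta> \<in> X1" using assms(1) by (simp add: X1_iff arcpt_def norm_mult)
  moreover have "fst (arcpt \<zeta> \<theta>) \<noteq> 0" using sp assms by (auto simp: arcpt_def)
  ultimately show "nonpole (arcpt \<zeta> \<theta>)" using nonpole_iff by blast
  show "arc_start (arcpt \<zeta> \<theta>) = \<zeta>" using sp assms(1)
    by (simp add: arc_start_def arcpt_def norm_mult)
  have "arccos (cos (\<theta>/2)) = \<theta>/2" using assms by (intro arccos_cos) auto
  then show "arc_angle (arcpt \<zeta> \<theta>) = \<theta>" by (simp add: arc_angle_def arcpt_def)
qed

lemma arcpt_arc_data: "nonpole x \<Longrightarrow> arcpt (arc_start x) (arc_angle x) = x"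
proof -
  assume x: "nonpole x"
  obtain w s where ws: "x = (w, s)" by force
  have x1: "x \<in> X1" using x by (simp add: nonpole_def)
  then have e: "(cmod w)^2 + s^2 = 1" and w: "w \<noteq> 0"
    using x nonpole_iff[OF x1] ws by (auto simp: X1_def)
  then have s: "-1 \<le> s" "s \<le> 1" using X1_snd_bounds[of "(w, s)"] by (auto simp: X1_def)
  have "sin (arccos s) = sqrt (1 - s^2)" using s by (rule sin_arccos)
  also have "\<dots> = cmod w" using e by (simp add: real_sqrt_unique)
  finally show ?thesis using cos_arccos[OF s] w ws
    by (simp add: arcpt_def arc_start_def arc_angle_def)
qed

lemma arcact_eq_arcpt:
  assumes g: "g \<in> su11" and x: "nonpole x"
  shows "arcact g x = arcpt (mob g (arc_start x)) (angle2pi (mob g (arc_end x) / mob g (arc_start x)))"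
proof -
  define \<zeta> \<theta> where "\<zeta> = arc_start x" and "\<theta> = arc_angle x"
  have u: "cmod \<zeta> = 1" and th: "0 < \<theta>" "\<theta> < 2*pi"
    using nonpole_arc_data[OF x] by (auto simp: \<zeta>_def \<theta>_def)
  note image = mob_image_arcset[OF g u th] mob_arc_endpoints[OF g u th]
  define y0 where "y0 = arcpt (mob g \<zeta>) (angle2pi (mob g (\<zeta> * cis \<theta>) / mob g \<zeta>))"
  have "arcact g x = (THE y. \<exists>\<zeta>' \<theta>'. cmod \<zeta>' = 1 \<and> 0 < \<theta>' \<and> \<theta>' < 2 * pi \<and>
            arcset \<zeta>' \<theta>' = mob g ` arcset \<zeta> \<theta> \<and> y = arcpt \<zeta>' \<theta>')"
    using x unfolding arcact_def Let_def \<zeta>_def \<theta>_def arc_start_def arc_angle_def nonpole_def by simp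
  also have "\<dots> = y0"
  proof (rule the_equality)
    show "\<exists>\<zeta>' \<theta>'. cmod \<zeta>' = 1 \<and> 0 < \<theta>' \<and> \<theta>' < 2 * pi \<and>
            arcset \<zeta>' \<theta>' = mob g ` arcset \<zeta> \<theta> \<and> y0 = arcpt \<zeta>' \<theta>'"
      using image unfolding y0_def by metis
  next
    fix y assume "\<exists>\<zeta>' \<theta>'. cmod \<zeta>' = 1 \<and> 0 < \<theta>' \<and> \<theta>' < 2 * pi \<and>
            arcset \<zeta>' \<theta>' = mob g ` arcset \<zeta> \<theta> \<and> y = arcpt \<zeta>' \<theta>'"
    then obtain \<zeta>' \<theta>' where y: "cmod \<zeta>' = 1" "0 < \<theta>'" "\<theta>' < 2 * pi"
      "arcset \<zeta>' \<theta>' = mob g ` arcset \<zeta> \<theta>" "y = arcpt \<zeta>' \<theta>'" by blast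
    have "\<zeta>' = mob g \<zeta> \<and> \<theta>' = angle2pi (mob g (\<zeta> * cis \<theta>) / mob g \<zeta>)"
      by (rule arcset_inj) (use y image in auto)
    then show "y = y0" using y unfolding y0_def by simp
  qed
  finally show ?thesis unfolding y0_def \<zeta>_def \<theta>_def arc_end_def .
qed

lemma arcact_pole [simp]: "arcact g pole1 = pole1" "arcact g pole2 = pole2"
  by (simp_all add: arcact_def)

lemma arcact_nonpole:
  assumes g: "g \<in> su11" and x: "nonpole x"
  shows "nonpole (arcact g x)" "arc_start (arcact g x) = mob g (arc_start x)"
    "arc_end (arcact g x) = mob g (arc_end x)"
proof -
  note data = nonpole_arc_data[OF x]
  note image = mob_image_arcset[OF g data(1) data(3,4), folded arc_end_def]
    mob_arc_endpoints[OF g data(1) data(3,4), folded arc_end_def]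
  show "nonpole (arcact g x)" "arc_start (arcact g x) = mob g (arc_start x)"
    unfolding arcact_eq_arcpt[OF g x] using nonpole_arcpt image by auto
  then show "arc_end (arcact g x) = mob g (arc_end x)"
    unfolding arc_end_def[of "arcact g x"] unfolding arcact_eq_arcpt[OF g x]
    using nonpole_arcpt image by auto
qed

lemma arcact_one:
  assumes "x \<in> X1"
  shows "arcact (1, 0) x = x"
  using assms
proof (cases rule: X1_cases)
  case nonpole
  have "(1::complex, 0::complex) \<in> su11" by (simp add: su11_def)
  moreover have "arc_end x / arc_start x = cis (arc_angle x)"
    using nonpole_arc_data[OF nonpole] by (auto simp: arc_end_def)
  ultimately show ?thesis
    using arcact_eq_arcpt nonpole angle2pi_cis nonpole_arc_data[OF nonpole] arcpt_arc_data[OF nonpole]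
    by simp
qed auto

lemma arcact_X1:
  assumes "g \<in> su11" "x \<in> X1"
  shows "arcact g x \<in> X1"
  using assms(2)
proof (cases rule: X1_cases)
  case nonpole then show ?thesis using arcact_nonpole(1)[OF assms(1)] by (auto simp: nonpole_def)
qed (use assms(2) in auto)

lemma arcact_gmul:
  assumes g: "g \<in> su11" and h: "h \<in> su11" and "x \<in> X1"
  shows "arcact g (arcact h x) = arcact (gmul g h) x"
  using \<open>x \<in> X1\<close>
proof (cases rule: X1_cases)
  case nonpole
  have D: "mob_denom h (arc_start x) \<noteq> 0" "mob_denom h (arc_end x) \<noteq> 0"
    using mob_denom_nonzero h nonpole_arc_data[OF nonpole] by auto
  show ?thesis
    unfolding arcact_eq_arcpt[OF g arcact_nonpole(1)[OF h nonpole]]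
      arcact_eq_arcpt[OF gmul_su11[OF g h] nonpole]
      arcact_nonpole[OF h nonpole] mob_gmul[OF D(1)] mob_gmul[OF D(2)] ..
qed auto


section \<open>The quotient space M\<close>

definition su11_subgroup :: "(complex \<times> complex) set \<Rightarrow> bool" where
  "su11_subgroup G \<longleftrightarrow>
     G \<subseteq> su11 \<and> (1, 0) \<in> G \<and> (\<forall>g\<in>G. \<forall>h\<in>G. gmul g h \<in> G) \<and> (\<forall>g\<in>G. ginv g \<in> G)"

lemma cocompact_surface_group_imp_su11_subgroup: "cocompact_surface_group G \<Longrightarrow> su11_subgroup G"
  by (simp add: cocompact_surface_group_def su11_subgroup_def)

lemma Ytot_iff: "p \<in> Ytot \<longleftrightarrow> cmod (fst p) < 1 \<and> snd p \<in> X1"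
  by (cases p) (auto simp: Ytot_def disc_def)

lemma Ytot_cases [consumes 1, case_names nonpole pole]:
  assumes "p \<in> Ytot"
  obtains "nonpole (snd p)" | "fst (snd p) = 0" "snd p = pole1 \<or> snd p = pole2"
  using assms nonpole_iff[of "snd p"] X1_fst_eq_0_imp_pole[of "snd p"] by (auto simp: Ytot_iff)

lemma gact_Ytot: "g \<in> su11 \<Longrightarrow> p \<in> Ytot \<Longrightarrow> gact g p \<in> Ytot"
  using norm_mob_less_1[OF ginv_su11] arcact_X1[OF ginv_su11] by (simp add: Ytot_iff gact_def)

lemma gact_gmul:
  assumes g: "g \<in> su11" and h: "h \<in> su11" and p: "p \<in> Ytot"
  shows "gact h (gact g p) = gact (gmul g h) p"
proof -
  have gi: "ginv g \<in> su11" "ginv h \<in> su11" using g h ginv_su11 by auto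
  have "mob_denom (ginv g) (fst p) \<noteq> 0" using mob_denom_nonzero gi p by (auto simp: Ytot_iff)
  then have "mob (ginv h) (mob (ginv g) (fst p)) = mob (ginv (gmul g h)) (fst p)"
    unfolding ginv_gmul_distrib by (simp add: mob_gmul)
  moreover have "arcact (ginv h) (arcact (ginv g) (snd p)) = arcact (ginv (gmul g h)) (snd p)"
    unfolding ginv_gmul_distrib using arcact_gmul[OF gi(2) gi(1)] p by (simp add: Ytot_iff)
  ultimately show ?thesis by (simp add: gact_def)
qed

lemma gact_one: "p \<in> Ytot \<Longrightarrow> gact (1, 0) p = p"
  using arcact_one[of "snd p"] by (simp add: gact_def ginv_def Ytot_iff)

lemma gact_ginv_gact: "g \<in> su11 \<Longrightarrow> p \<in> Ytot \<Longrightarrow> gact (ginv g) (gact g p) = p"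
  using gact_gmul[OF _ ginv_su11] gmul_ginv gact_one by metis

lemma Mproj_self: "su11_subgroup G \<Longrightarrow> p \<in> Ytot \<Longrightarrow> p \<in> Mproj G p"
  using gact_one[of p] unfolding Mproj_def su11_subgroup_def
    by (metis (mono_tags, lifting) mem_Collect_eq)

lemma Mproj_subset:
  assumes "su11_subgroup G" "p \<in> Ytot"
  shows "Mproj G p \<subseteq> Ytot"
proof
  fix q assume "q \<in> Mproj G p"
  then obtain g where "g \<in> G" "q = gact g p" unfolding Mproj_def by blast
  then show "q \<in> Ytot" using gact_Ytot[of g p] assms by (auto simp: su11_subgroup_def)
qed

lemma Mproj_eq:
  assumes G: "su11_subgroup G" and p: "p \<in> Ytot" and q: "q \<in> Mproj G p"
  shows "Mproj G q = Mproj G p"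
proof -
  obtain g where g: "g \<in> G" "q = gact g p" using q by (auto simp: Mproj_def)
  have gs: "g \<in> su11" using g G by (auto simp: su11_subgroup_def)
  show ?thesis
  proof (intro set_eqI iffI)
    fix r assume "r \<in> Mproj G q"
    then obtain h where h: "h \<in> G" "r = gact h q" by (auto simp: Mproj_def)
    have "r = gact (gmul g h) p" using gact_gmul[OF gs _ p, of h] h G g
      by (auto simp: su11_subgroup_def)
    then show "r \<in> Mproj G p" using G g h by (auto simp: Mproj_def su11_subgroup_def)
  next
    fix r assume "r \<in> Mproj G p"
    then obtain h where h: "h \<in> G" "r = gact h p" by (auto simp: Mproj_def)
    have p': "p = gact (ginv g) q" using gact_ginv_gact[OF gs p] g by simp
    have "q \<in> Ytot" using gact_Ytot[OF gs p] g by simp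
    then have "r = gact (gmul (ginv g) h) q"
      using gact_gmul[OF ginv_su11[OF gs], of h q] h G p' by (auto simp: su11_subgroup_def)
    then show "r \<in> Mproj G q" using G g h by (auto simp: Mproj_def su11_subgroup_def)
  qed
qed

lemma Mspace_disjoint:
  assumes G: "su11_subgroup G" and "c \<in> Mspace G" "d \<in> Mspace G" "q \<in> c" "q \<in> d"
  shows "c = d"
proof -
  obtain p1 p2 where "p1 \<in> Ytot" "c = Mproj G p1" "p2 \<in> Ytot" "d = Mproj G p2"
    using assms(2,3) by (auto simp: Mspace_def)
  then show ?thesis using Mproj_eq[OF G, of p1 q] Mproj_eq[OF G, of p2 q] assms(4,5) by simp
qed

lemma Union_Mspace: "su11_subgroup G \<Longrightarrow> \<Union> (Mspace G) = Ytot"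
  using Mproj_subset Mproj_self unfolding Mspace_def by fast

lemma istopology_Mtop:
  assumes G: "su11_subgroup G"
  shows "istopology (\<lambda>U. U \<subseteq> Mspace G \<and> openin (top_of_set Ytot) (\<Union>U))"
proof -
  have "S \<inter> T \<subseteq> Mspace G \<and> openin (top_of_set Ytot) (\<Union> (S \<inter> T))"
    if S: "S \<subseteq> Mspace G" "openin (top_of_set Ytot) (\<Union> S)"
      and T: "T \<subseteq> Mspace G" "openin (top_of_set Ytot) (\<Union> T)" for S T
  proof -
    have "\<Union>(S \<inter> T) = \<Union>S \<inter> \<Union>T"
    proof
      show "\<Union> S \<inter> \<Union> T \<subseteq> \<Union> (S \<inter> T)"
      proof
        fix q assume "q \<in> \<Union> S \<inter> \<Union> T"
        then obtain c d where "c \<in> S" "d \<in> T" "q \<in> c" "q \<in> d" by auto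
        then show "q \<in> \<Union> (S \<inter> T)" using Mspace_disjoint[OF G, of c d q] S T by auto
      qed
    qed auto
    then show ?thesis using S T by auto
  qed
  moreover have "\<Union> K \<subseteq> Mspace G \<and> openin (top_of_set Ytot) (\<Union> (\<Union> K))"
    if "\<forall>U\<in>K. U \<subseteq> Mspace G \<and> openin (top_of_set Ytot) (\<Union> U)" for K
  proof -
    have "\<Union>(\<Union>K) = \<Union>(Union ` K)" by auto
    then show ?thesis using that by auto
  qed
  ultimately show ?thesis unfolding istopology_def by auto
qed

lemma openin_Mtop:
  "su11_subgroup G \<Longrightarrow> openin (Mtop G) U \<longleftrightarrow> U \<subseteq> Mspace G \<and> openin (top_of_set Ytot) (\<Union>U)"
  unfolding Mtop_def by (simp add: topology_inverse'[OF istopology_Mtop])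

lemma topspace_Mtop:
  assumes "su11_subgroup G"
  shows "topspace (Mtop G) = Mspace G"
proof -
  have "openin (Mtop G) (Mspace G)" using openin_Mtop[OF assms] Union_Mspace[OF assms] by simp
  then have "Mspace G \<subseteq> topspace (Mtop G)" by (rule openin_subset)
  moreover have "topspace (Mtop G) \<subseteq> Mspace G"
    using openin_Mtop[OF assms, of "topspace (Mtop G)"] openin_topspace[of "Mtop G"] by simp
  ultimately show ?thesis by blast
qed

text \<open>A G-invariant function \<open>f\<close> on D x X1 induces \<open>Mlift f\<close> on M; the choice of
  representative is irrelevant by invariance.\<close>

definition Mlift ::
    "(complex \<times> (complex \<times> real) \<Rightarrow> 'b) \<Rightarrow> (complex \<times> (complex \<times> real)) set \<Rightarrow> 'b" where
  "Mlift f c = f (SOME p. p \<in> c \<inter> Ytot)"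

definition invariant :: "(complex \<times> complex) set \<Rightarrow> (complex \<times> (complex \<times> real) \<Rightarrow> 'b) \<Rightarrow> bool" where
  "invariant G f \<longleftrightarrow> (\<forall>g\<in>G. \<forall>p\<in>Ytot. f (gact g p) = f p)"

definition su11_invariant :: "(complex \<times> (complex \<times> real) \<Rightarrow> 'b) \<Rightarrow> bool" where
  "su11_invariant f \<longleftrightarrow> (\<forall>g\<in>su11. \<forall>p\<in>Ytot. f (mob g (fst p), arcact g (snd p)) = f p)"

lemma su11_invariant_imp_invariant: "su11_subgroup G \<Longrightarrow> su11_invariant f \<Longrightarrow> invariant G f"
  unfolding invariant_def su11_invariant_def su11_subgroup_def gact_def using ginv_su11 by fastforce

lemma some_in_Mspace:
  assumes G: "su11_subgroup G" and c: "c \<in> Mspace G"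
  shows "(SOME p. p \<in> c \<inter> Ytot) \<in> Ytot" "c = Mproj G (SOME p. p \<in> c \<inter> Ytot)"
proof -
  obtain p where p: "p \<in> Ytot" "c = Mproj G p" using c by (auto simp: Mspace_def)
  then have "p \<in> c \<inter> Ytot" using Mproj_self[OF G] by simp
  then have "(SOME p. p \<in> c \<inter> Ytot) \<in> c \<inter> Ytot" by (rule someI)
  then show "(SOME p. p \<in> c \<inter> Ytot) \<in> Ytot" "c = Mproj G (SOME p. p \<in> c \<inter> Ytot)"
    using Mproj_eq[OF G p(1)] p(2) by auto
qed

lemma Mlift_Mproj:
  assumes G: "su11_subgroup G" and f: "invariant G f" and p: "p \<in> Ytot"
  shows "Mlift f (Mproj G p) = f p"
proof -
  have "\<exists>q. q \<in> Mproj G p \<inter> Ytot" using Mproj_self[OF G p] p by blast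
  then have "(SOME q. q \<in> Mproj G p \<inter> Ytot) \<in> Mproj G p" by (metis (mono_tags, lifting) IntE someI)
  then obtain g where "g \<in> G" "(SOME q. q \<in> Mproj G p \<inter> Ytot) = gact g p" by (auto simp: Mproj_def)
  then show ?thesis using f p unfolding Mlift_def invariant_def by simp
qed

lemma Union_Mlift_preimage:
  assumes G: "su11_subgroup G" and f: "invariant G f"
  shows "\<Union>{c \<in> Mspace G. Mlift f c \<in> U} = Ytot \<inter> f -` U"
proof
  show "\<Union>{c \<in> Mspace G. Mlift f c \<in> U} \<subseteq> Ytot \<inter> f -` U"
  proof
    fix q assume "q \<in> \<Union>{c \<in> Mspace G. Mlift f c \<in> U}"
    then obtain p where p: "p \<in> Ytot" "q \<in> Mproj G p" "Mlift f (Mproj G p) \<in> U"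
      by (auto simp: Mspace_def)
    have q: "q \<in> Ytot" using Mproj_subset[OF G p(1)] p by auto
    have "f q = f p" using Mlift_Mproj[OF G f] Mproj_eq[OF G p(1) p(2)] p(1) q by metis
    then show "q \<in> Ytot \<inter> f -` U" using q p Mlift_Mproj[OF G f p(1)] by simp
  qed
  show "Ytot \<inter> f -` U \<subseteq> \<Union>{c \<in> Mspace G. Mlift f c \<in> U}"
    using Mlift_Mproj[OF G f] Mproj_self[OF G] by (auto simp: Mspace_def)
qed

lemma openin_Mlift_preimage:
  assumes "su11_subgroup G" "invariant G f" "continuous_on Ytot f" "open U"
  shows "openin (Mtop G) {c \<in> Mspace G. Mlift f c \<in> U}"
  unfolding openin_Mtop[OF assms(1)] Union_Mlift_preimage[OF assms(1,2)]
  using continuous_openin_preimage_gen[OF assms(3,4)] by auto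

lemma continuous_map_Mlift:
  assumes "su11_subgroup G" "invariant G f" "continuous_on Ytot f"
  shows "continuous_map (Mtop G) euclideanreal (Mlift f)"
  unfolding continuous_map_def topspace_Mtop[OF assms(1)]
  using openin_Mlift_preimage[OF assms] by auto


section \<open>The harmonic measure of an arc\<close>

text \<open>For \<open>|w| < 1\<close> the map \<open>t \<mapsto> t + 2 Arg (1 - w e^{-it})\<close> is the angle of the boundary
  map of the disc automorphism sending \<open>w\<close> to 0; it is strictly increasing and
  commutes with translation by \<open>2\<pi>\<close>.\<close>

locale boundary_angle =
  fixes x0 y0 :: real
  assumes inside: "x0^2 + y0^2 < 1"
begin

definition R :: "real \<Rightarrow> real" where "R t = 1 - x0 * cos t - y0 * sin t"
definition I :: "real \<Rightarrow> real" where "I t = x0 * sin t - y0 * cos t"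
definition angle :: "real \<Rightarrow> real" where "angle t = t + 2 * arctan (I t / R t)"

lemma sum_squares: "(x0 * cos t + y0 * sin t)^2 + (I t)^2 = x0^2 + y0^2"
proof -
  have "(x0 * cos t + y0 * sin t)^2 + (I t)^2 = (x0^2 + y0^2) * ((sin t)^2 + (cos t)^2)"
    unfolding I_def power2_eq_square by algebra
  then show ?thesis by simp
qed

lemma R_pos: "0 < R t"
proof (rule ccontr)
  assume "\<not> 0 < R t"
  then have "1 \<le> (x0 * cos t + y0 * sin t)^2" unfolding R_def by (simp add: one_le_power)
  then show False using sum_squares[of t] inside by (smt (verit) zero_le_power2)
qed

lemma angle_deriv_pos: "\<exists>y. (angle has_real_derivative y) (at t) \<and> 0 < y"
proof -
  have Rn: "R t \<noteq> 0" using R_pos[of t] by simp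
  have dR: "(R has_real_derivative I t) (at t)" and dI: "(I has_real_derivative (1 - R t)) (at t)"
    unfolding R_def I_def by (auto intro!: derivative_eq_intros)
  define d where "d = 1 + 2 * (inverse (1 + (I t / R t)^2) * (((1 - R t) * R t - I t * I t) / (R t * R t)))"
  have "((\<lambda>t. t + 2 * arctan (I t / R t)) has_real_derivative d) (at t)"
    unfolding d_def by (intro DERIV_add DERIV_cmult DERIV_ident DERIV_chain2[OF DERIV_arctan]
        DERIV_divide[OF dI dR Rn])
  moreover have "d = (2 * R t - (R t)^2 - (I t)^2) / ((R t)^2 + (I t)^2)"
  proof -
    have nz: "(R t)^2 + (I t)^2 \<noteq> 0" using Rn by (simp add: add_nonneg_eq_0_iff)
    have "1 + (I t / R t)^2 = ((R t)^2 + (I t)^2) / (R t)^2" using Rn by (simp add: field_simps)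
    then have "inverse (1 + (I t / R t)^2) * (((1 - R t) * R t - I t * I t) / (R t * R t))
        = ((1 - R t) * R t - I t * I t) / ((R t)^2 + (I t)^2)"
      using Rn by (simp add: power2_eq_square)
    then have "d = ((R t)^2 + (I t)^2 + 2 * ((1 - R t) * R t - I t * I t)) / ((R t)^2 + (I t)^2)"
      unfolding d_def using nz by (simp add: add_divide_distrib)
    then show ?thesis by (simp add: algebra_simps power2_eq_square)
  qed
  moreover have "2 * R t - (R t)^2 - (I t)^2 = 1 - x0^2 - y0^2"
    using sum_squares[of t] unfolding R_def by (simp add: algebra_simps power2_eq_square)
  moreover have "0 < (R t)^2 + (I t)^2" using Rn by (simp add: add_pos_nonneg)
  ultimately show ?thesis using inside unfolding angle_def by (intro exI[of _ d]) simp
qed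

lemma angle_strict_mono: "a < b \<Longrightarrow> angle a < angle b"
  by (rule DERIV_pos_imp_increasing) (use angle_deriv_pos in auto)

lemma angle_add_2pi: "angle (t + 2*pi) = angle t + 2*pi"
  by (simp add: angle_def R_def I_def)

end

definition arc_hmeasure :: "complex \<Rightarrow> complex \<Rightarrow> real \<Rightarrow> real" where
  "arc_hmeasure z a \<theta> = \<theta>/(2*pi) + (Arg (1 - z/(a * cis \<theta>)) - Arg (1 - z/a))/pi"

lemma arc_hmeasure_bounds:
  assumes z: "cmod z < 1" and a: "cmod a = 1" and th: "0 < \<theta>" "\<theta> < 2*pi"
  shows "0 < arc_hmeasure z a \<theta>" "arc_hmeasure z a \<theta> < 1"
proof -
  define w0 where "w0 = z / a"
  have "(cmod w0)^2 < 1" using z a by (simp add: w0_def norm_divide abs_square_less_1)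
  then interpret boundary_angle "Re w0" "Im w0" by unfold_locales (simp add: cmod_power2)
  have a0: "a \<noteq> 0" using a by auto
  have e: "1 - z/(a * cis t) = Complex (R t) (I t)" for t
  proof -
    have "cis t * cis (- t) = 1" by (simp add: cis_mult)
    then have "z/(a * cis t) = w0 * cis (-t)" using a0 by (simp add: w0_def field_simps)
    then show ?thesis unfolding R_def I_def by (simp add: complex_eq_iff algebra_simps)
  qed
  have e0: "1 - z/a = Complex (R 0) (I 0)" using e[of 0] by simp
  have A: "Arg (Complex (R t) (I t)) = arctan (I t / R t)" for t
    using arg_conv_arctan[of "Complex (R t) (I t)"] R_pos by simp
  have "2*pi * arc_hmeasure z a \<theta> = angle \<theta> - angle 0"
    unfolding arc_hmeasure_def e e0 A angle_def by (simp add: field_simps)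
  moreover have "angle 0 < angle \<theta>" "angle \<theta> < angle (0 + 2*pi)" using angle_strict_mono th by auto
  ultimately have "0 < 2*pi * arc_hmeasure z a \<theta>" "2*pi * arc_hmeasure z a \<theta> < 2*pi * 1"
    using angle_add_2pi[of 0] by auto
  then show "0 < arc_hmeasure z a \<theta>" "arc_hmeasure z a \<theta> < 1" by (simp_all add: zero_less_mult_iff)
qed

text \<open>\<open>cis (2\<pi> arc_hmeasure z a \<theta>)\<close> is the following cross ratio of \<open>z, a, b = a cis \<theta>\<close>,
  which Moebius maps of SU(1,1) preserve; since the harmonic measure lies in (0,1),
  this determines it and proves its invariance.\<close>

definition hmeasure_cross_ratio :: "complex \<Rightarrow> complex \<Rightarrow> complex \<Rightarrow> complex" where
  "hmeasure_cross_ratio z a b = (b - z) * (1 - cnj z * a) / ((1 - cnj z * b) * (a - z))"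

lemma norm_1_sub_nonzero: "cmod a = 1 \<Longrightarrow> cmod z < 1 \<Longrightarrow> a - z \<noteq> 0"
  by auto

lemma cis_Arg_squared: "p \<noteq> 0 \<Longrightarrow> (cis (Arg p))^2 = p / cnj p"
proof -
  assume p: "p \<noteq> 0"
  have "cis (Arg p) = p / of_real (cmod p)"
    using cis_Arg[OF p] by (simp add: sgn_div_norm scaleR_conv_of_real divide_inverse mult.commute)
  then have "(cis (Arg p))^2 = p^2 / (p * cnj p)"
    by (simp add: power_divide complex_norm_square[symmetric])
  then show ?thesis using p by (simp add: power2_eq_square)
qed

lemma cis_arc_hmeasure:
  assumes z: "cmod z < 1" and a: "cmod a = 1"
  shows "cis (2*pi * arc_hmeasure z a \<theta>) = hmeasure_cross_ratio z a (a * cis \<theta>)"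
proof -
  define b where "b = a * cis \<theta>"
  have b: "cmod b = 1" using a by (simp add: b_def norm_mult)
  have ab0: "a \<noteq> 0" "b \<noteq> 0" using a b by auto
  have ab_z: "a - z \<noteq> 0" "b - z \<noteq> 0" using norm_1_sub_nonzero a b z by auto
  have q: "1 - z/b = (b - z)/b" "1 - z/a = (a - z)/a" using ab0
    by (simp_all add: diff_divide_distrib)
  then have q0: "1 - z/b \<noteq> 0" "1 - z/a \<noteq> 0" using ab0 ab_z by simp_all
  have "1 / c = cnj c" if "cmod c = 1" for c
  proof -
    have "c * cnj c = 1" using complex_norm_square[of c] that by simp
    moreover have "c \<noteq> 0" using that by auto
    ultimately show ?thesis by (simp add: field_simps)
  qed
  then have cnj_q: "cnj (1 - z/b) = 1 - cnj z * b" "cnj (1 - z/a) = 1 - cnj z * a"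
    using a b by (simp_all add: divide_inverse)
  have nz: "1 - cnj z * b \<noteq> 0" "1 - cnj z * a \<noteq> 0" using q0 unfolding cnj_q[symmetric] by simp_all
  have "2*pi * arc_hmeasure z a \<theta> = \<theta> + 2 * Arg (1 - z/b) - 2 * Arg (1 - z/a)"
    unfolding arc_hmeasure_def b_def by (simp add: field_simps)
  moreover have "cis (\<theta> + 2 * Arg (1 - z/b) - 2 * Arg (1 - z/a))
      = cis \<theta> * cis (2 * Arg (1 - z/b)) / cis (2 * Arg (1 - z/a))"
    by (simp only: cis_mult cis_divide)
  moreover have "cis (2 * y) = (cis y)^2" for y
    using Complex.DeMoivre[of y 2] by simp
  ultimately have "cis (2*pi * arc_hmeasure z a \<theta>)
      = cis \<theta> * (cis (Arg (1 - z/b)))^2 / (cis (Arg (1 - z/a)))^2"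
    by simp
  also have "\<dots> = (b/a) * ((1 - z/b) / (1 - cnj z * b)) / ((1 - z/a) / (1 - cnj z * a))"
    unfolding cis_Arg_squared[OF q0(1)] cis_Arg_squared[OF q0(2)] cnj_q using ab0
      by (simp add: b_def)
  also have "\<dots> = hmeasure_cross_ratio z a b"
  proof -
    have "(b/a) * (((b - z)/b) / Q) / (((a - z)/a) / P) = (b - z) * P / (Q * (a - z))"
      if "P \<noteq> 0" "Q \<noteq> 0" for P Q
      using that ab0 ab_z by (simp add: field_simps)
    then show ?thesis unfolding hmeasure_cross_ratio_def q using nz by simp
  qed
  finally show ?thesis unfolding b_def .
qed

lemma hmeasure_cross_ratio_mob:
  assumes g: "g \<in> su11" and z: "cmod z < 1" and a: "cmod a = 1" and b: "cmod b = 1"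
  shows "hmeasure_cross_ratio (mob g z) (mob g a) (mob g b) = hmeasure_cross_ratio z a b"
proof -
  have D: "mob_denom g z \<noteq> 0" "mob_denom g a \<noteq> 0" "mob_denom g b \<noteq> 0"
    using mob_denom_nonzero g z a b by auto
  have "a - z \<noteq> 0" using norm_1_sub_nonzero a z by auto
  moreover have "1 - cnj z * b \<noteq> 0"
  proof
    assume "1 - cnj z * b = 0"
    then have "1 = cmod (cnj z * b)" by (metis eq_iff_diff_eq_0 norm_one)
    then show False using z b by (simp add: norm_mult)
  qed
  moreover have "(X/(B*Z)) * (P/(cZ*A)) / ((Q/(cZ*B)) * (Y/(A*Z))) = X * P / (Q * Y)"
    if "A \<noteq> 0" "B \<noteq> 0" "Z \<noteq> 0" "cZ \<noteq> 0" "Q \<noteq> 0" "Y \<noteq> 0" for A B Z cZ X Y P Q :: complex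
    using that by (simp add: field_simps)
  ultimately show ?thesis
    unfolding hmeasure_cross_ratio_def mob_diff[OF g D(3) D(1)] mob_diff[OF g D(2) D(1)]
      one_minus_cnj_mob_mult_mob[OF g D(1) D(2)] one_minus_cnj_mob_mult_mob[OF g D(1) D(3)]
    using D by simp
qed

text \<open>At the poles \<open>arc_start\<close> and \<open>arc_end\<close> are 0 (division by zero), and the formula
  gives the harmonic measures 0 and 1 of the degenerate arcs.\<close>

definition hmeasure :: "complex \<times> (complex \<times> real) \<Rightarrow> real" where
  "hmeasure p = arc_angle (snd p)/(2*pi)
     + (Arg (1 - fst p / arc_end (snd p)) - Arg (1 - fst p / arc_start (snd p)))/pi"

lemma arc_start_end_pole: "x = pole1 \<or> x = pole2 \<Longrightarrow> arc_start x = 0 \<and> arc_end x = 0"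
  by (auto simp: arc_start_def arc_end_def pole1_def pole2_def)

lemma su11_invariant_hmeasure: "su11_invariant hmeasure"
  unfolding su11_invariant_def
proof (intro ballI)
  fix g p assume g: "g \<in> su11" and p: "p \<in> Ytot"
  obtain z x where pz: "p = (z, x)" by (cases p) blast
  have z: "cmod z < 1" and "x \<in> X1" using p pz by (auto simp: Ytot_iff)
  from \<open>x \<in> X1\<close> show "hmeasure (mob g (fst p), arcact g (snd p)) = hmeasure p"
  proof (cases rule: X1_cases)
    case nonpole
    note data = nonpole_arc_data[OF nonpole]
    note gx = arcact_nonpole[OF g nonpole]
    note gdata = nonpole_arc_data[OF gx(1)]
    have gz: "cmod (mob g z) < 1" using norm_mob_less_1[OF g z] .
    define U U' where "U = arc_hmeasure z (arc_start x) (arc_angle x)"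
      and "U' = arc_hmeasure (mob g z) (arc_start (arcact g x)) (arc_angle (arcact g x))"
    have "hmeasure p = U" "hmeasure (mob g (fst p), arcact g (snd p)) = U'"
      by (simp_all add: pz U_def U'_def hmeasure_def arc_hmeasure_def arc_end_def)
    moreover have "0 < U" "U < 1" "0 < U'" "U' < 1"
      unfolding U_def U'_def using arc_hmeasure_bounds z gz data gdata by auto
    moreover have "cis (2*pi*U') = cis (2*pi*U)"
    proof -
      have "cis (2*pi*U') = hmeasure_cross_ratio (mob g z) (arc_start (arcact g x)) (arc_end (arcact g x))"
        unfolding U'_def cis_arc_hmeasure[OF gz gdata(1)] arc_end_def ..
      also have "\<dots> = hmeasure_cross_ratio z (arc_start x) (arc_end x)"
        unfolding gx(2,3) by (rule hmeasure_cross_ratio_mob[OF g z data(1,2)])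
      also have "\<dots> = cis (2*pi*U)" unfolding U_def cis_arc_hmeasure[OF z data(1)] arc_end_def ..
      finally show ?thesis .
    qed
    ultimately show ?thesis using cis_inj_on_0_2pi[of "2*pi*U'" "2*pi*U"] by simp
  next
    case pole
    then show ?thesis using arc_start_end_pole[of x] pz by (auto simp: hmeasure_def)
  qed
qed


section \<open>A leafwise holomorphic function with real part the harmonic measure\<close>

text \<open>\<open>hmeasure_holo 0\<close> is holomorphic in \<open>z\<close> with real part \<open>hmeasure\<close>, and
  \<open>hmeasure_holo (Suc n)\<close> is its \<open>(n+1)\<close>-st derivative in \<open>z\<close>.\<close>

fun hmeasure_holo :: "nat \<Rightarrow> complex \<times> (complex \<times> real) \<Rightarrow> complex" where
  "hmeasure_holo 0 p = of_real (arc_angle (snd p)/(2*pi))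
     + (Ln (1 - fst p / arc_end (snd p)) - Ln (1 - fst p / arc_start (snd p))) / (\<i> * of_real pi)"
| "hmeasure_holo (Suc n) p = - of_real (fact n) / (\<i> * of_real pi)
     * (1/(arc_end (snd p) - fst p)^(Suc n) - 1/(arc_start (snd p) - fst p)^(Suc n))"

lemma one_minus_div_Re_pos:
  assumes "cmod a = 1" "cmod z < 1"
  shows "0 < Re (1 - z/a)"
proof -
  have "cmod (z/a) < 1" using assms by (simp add: norm_divide)
  then have "Re (z/a) < 1" using complex_Re_le_cmod[of "z/a"] by linarith
  then show ?thesis by simp
qed

lemma one_minus_div_not_nonpos_Reals:
  assumes "cmod a = 1" "cmod z < 1"
  shows "1 - z/a \<notin> \<real>\<^sub>\<le>\<^sub>0"
  using one_minus_div_Re_pos[OF assms] by (simp only: complex_nonpos_Reals_iff not_le) simp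

lemma Re_hmeasure_holo_0:
  assumes p: "p \<in> Ytot"
  shows "Re (hmeasure_holo 0 p) = hmeasure p"
  using p
proof (cases rule: Ytot_cases)
  case nonpole
  have z: "cmod (fst p) < 1" using p by (simp add: Ytot_iff)
  have "1 - fst p / arc_end (snd p) \<noteq> 0" "1 - fst p / arc_start (snd p) \<noteq> 0"
    using one_minus_div_Re_pos[OF nonpole_arc_data(1)[OF nonpole] z]
      one_minus_div_Re_pos[OF nonpole_arc_data(2)[OF nonpole] z] by auto
  then show ?thesis using Arg_eq_Im_Ln
    by (simp add: hmeasure_def Re_divide power2_eq_square field_simps)
next
  case pole
  then show ?thesis using arc_start_end_pole[OF pole(2)] by (simp add: hmeasure_def)
qed

lemma hmeasure_holo_pole:
  assumes "x = pole1 \<or> x = pole2"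
  shows "hmeasure_holo 0 (w, x) = of_real (arc_angle x/(2*pi))" "hmeasure_holo (Suc n) (w, x) = 0"
  using arc_start_end_pole[OF assms] by simp_all

lemma has_field_derivative_inverse_power:
  fixes c z :: complex
  assumes "c - z \<noteq> 0"
  shows "((\<lambda>w. 1/(c - w)^(Suc j)) has_field_derivative of_nat (Suc j) / (c - z)^(Suc (Suc j))) (at z)"
proof -
  have "((\<lambda>w. c - w) has_field_derivative -1) (at z)" by (auto intro!: derivative_eq_intros)
  from DERIV_power[OF this, of "Suc j"]
  have "((\<lambda>w. (c - w)^(Suc j)) has_field_derivative of_nat (Suc j) * (c - z)^j * (-1)) (at z)"
    by (simp add: algebra_simps)
  from DERIV_inverse_fun[OF this] assms
  have "((\<lambda>w. inverse ((c - w)^(Suc j))) has_field_derivative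
      - (of_nat (Suc j) * (c - z)^j * (-1) * inverse (((c - z)^(Suc j))^2))) (at z)"
    by (simp only: power2_eq_square power_Suc power_0 mult_1_right) simp
  moreover have "((c - z)^(Suc j))^2 = (c - z)^j * (c - z)^(Suc (Suc j))"
    by (simp add: power2_eq_square power_add[symmetric])
  moreover have "- (of_nat (Suc j) * y^j * (-1) * inverse (y^j * y^(Suc (Suc j))))
      = of_nat (Suc j) / y^(Suc (Suc j))"
    if "y \<noteq> 0" for y :: complex
    using that by (simp add: field_simps)
  ultimately show ?thesis using assms by (simp only: inverse_eq_divide) simp
qed

lemma has_field_derivative_hmeasure_holo_nonpole:
  assumes x: "nonpole x" and z: "cmod z < 1"
  shows "((\<lambda>w. hmeasure_holo n (w, x)) has_field_derivative hmeasure_holo (Suc n) (z, x)) (at z)"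
proof -
  define a b where "a = arc_start x" and "b = arc_end x"
  have ua: "cmod a = 1" and ub: "cmod b = 1" using nonpole_arc_data[OF x]
    by (auto simp: a_def b_def)
  then have ab0: "a \<noteq> 0" "b \<noteq> 0" and ab_z: "a - z \<noteq> 0" "b - z \<noteq> 0" using z by auto
  show ?thesis
  proof (cases n)
    case 0
    have "((\<lambda>w. Ln (1 - w/c)) has_field_derivative - 1/(c - z)) (at z)" if "cmod c = 1" for c
    proof -
      have "c \<noteq> 0" "c - z \<noteq> 0" using that z by auto
      moreover have "((\<lambda>w. Ln (1 - w/c)) has_field_derivative inverse (1 - z/c) * (- 1/c)) (at z)"
        using one_minus_div_not_nonpos_Reals[OF that z] \<open>c \<noteq> 0\<close>
        by (auto intro!: derivative_eq_intros)
      ultimately show ?thesis by (simp add: field_simps)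
    qed
    then have "((\<lambda>w. (Ln (1 - w/b) - Ln (1 - w/a)) / (\<i> * of_real pi))
        has_field_derivative (- 1/(b - z) - - 1/(a - z)) / (\<i> * of_real pi)) (at z)"
      using ua ub by (intro DERIV_cdivide DERIV_diff)
    from DERIV_add[OF DERIV_const this]
    have "((\<lambda>w. of_real (arc_angle x/(2*pi)) + (Ln (1 - w/b) - Ln (1 - w/a)) / (\<i> * of_real pi))
        has_field_derivative (- 1/(b - z) - - 1/(a - z)) / (\<i> * of_real pi)) (at z)"
      by simp
    then show ?thesis using 0 by (simp add: a_def[symmetric] b_def[symmetric] diff_divide_distrib)
  next
    case (Suc m)
    have "((\<lambda>w. - of_real (fact m) / (\<i> * of_real pi) * (1/(b - w)^(Suc m) - 1/(a - w)^(Suc m)))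
        has_field_derivative - of_real (fact m) / (\<i> * of_real pi)
          * (of_nat (Suc m) / (b - z)^(Suc (Suc m)) - of_nat (Suc m) / (a - z)^(Suc (Suc m)))) (at z)"
      by (intro DERIV_cmult DERIV_diff has_field_derivative_inverse_power ab_z)
    moreover have "- of_real (fact m) / (\<i> * of_real pi)
          * (of_nat (Suc m) / (b - z)^(Suc (Suc m)) - of_nat (Suc m) / (a - z)^(Suc (Suc m)))
        = - of_real (fact (Suc m)) / (\<i> * of_real pi)
          * (1 / (b - z)^(Suc (Suc m)) - 1 / (a - z)^(Suc (Suc m)))"
      by (simp add: fact_Suc divide_inverse algebra_simps)
    ultimately show ?thesis using Suc
      by (simp only: a_def[symmetric] b_def[symmetric] hmeasure_holo.simps fst_conv snd_conv)
  qed
qed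

lemma has_field_derivative_hmeasure_holo:
  assumes p: "p \<in> Ytot"
  shows "((\<lambda>w. hmeasure_holo n (w, snd p)) has_field_derivative hmeasure_holo (Suc n) p) (at (fst p))"
  using p
proof (cases rule: Ytot_cases)
  case nonpole
  then show ?thesis using has_field_derivative_hmeasure_holo_nonpole[OF nonpole] p
    by (simp add: Ytot_iff)
next
  case pole
  then have "(\<lambda>w. hmeasure_holo n (w, snd p)) = (\<lambda>w. hmeasure_holo n (fst p, snd p))"
    using hmeasure_holo_pole by (cases n) auto
  then show ?thesis using hmeasure_holo_pole(2)[OF pole(2)] by simp
qed

lemma continuous_on_open_Int_extend:
  assumes "open U" "continuous_on (S \<inter> U) f"
    and "\<And>p. p \<in> S \<Longrightarrow> p \<notin> U \<Longrightarrow> (f \<longlongrightarrow> f p) (at p within S)"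
  shows "continuous_on S f"
  unfolding continuous_on_def
proof
  fix p assume p: "p \<in> S"
  show "(f \<longlongrightarrow> f p) (at p within S)"
  proof (cases "p \<in> U")
    case True
    have "at p within S = at p within S \<inter> U" by (rule at_within_nhd[OF True assms(1)]) auto
    then show ?thesis using assms(2) p True by (simp add: continuous_on_def)
  qed (use assms(3) p in auto)
qed

lemma tendsto_within_of_norm_le:
  assumes "\<And>q. q \<in> S \<Longrightarrow> norm (f q - f p) \<le> h q" "continuous_on S h" "h p = 0" "p \<in> S"
  shows "(f \<longlongrightarrow> f p) (at p within S)"
proof -
  have "(h \<longlongrightarrow> 0) (at p within S)" using assms(2-4) by (metis continuous_on_def)
  moreover have "\<forall>\<^sub>F q in at p within S. norm (f q - f p) \<le> h q"
    using assms(1) by (auto simp: eventually_at_filter)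
  ultimately have "((\<lambda>q. f q - f p) \<longlongrightarrow> 0) (at p within S)" by (rule Lim_null_comparison[rotated])
  then show ?thesis by (simp add: LIM_zero_iff)
qed

definition off_poles :: "(complex \<times> (complex \<times> real)) set" where
  "off_poles = {p. fst (snd p) \<noteq> 0}"

lemma open_off_poles: "open off_poles"
  unfolding off_poles_def by (rule open_Collect_neq) (auto intro!: continuous_intros)

lemma nonpole_of_off_poles: "p \<in> Ytot \<inter> off_poles \<Longrightarrow> nonpole (snd p)"
  using nonpole_iff by (auto simp: Ytot_iff off_poles_def)

lemma continuous_on_arc_angle: "continuous_on Ytot (\<lambda>p. arc_angle (snd p))"
  unfolding arc_angle_def
  by (intro continuous_intros continuous_on_arccos ballI) (use X1_snd_bounds in \<open>auto simp: Ytot_iff\<close>)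

lemma continuous_on_arc_start: "continuous_on (Ytot \<inter> off_poles) (\<lambda>p. arc_start (snd p))"
  unfolding arc_start_def off_poles_def by (intro continuous_intros) auto

lemma continuous_on_arc_end: "continuous_on (Ytot \<inter> off_poles) (\<lambda>p. arc_end (snd p))"
  unfolding arc_end_def cis_conv_exp
  by (intro continuous_intros continuous_on_arc_start continuous_on_subset[OF continuous_on_arc_angle])
    auto

text \<open>Near a pole the arc degenerates: its endpoints approach each other.\<close>

definition arc_gap :: "complex \<times> real \<Rightarrow> real" where
  "arc_gap x = cmod (cis (arc_angle x) - 1)"

lemma continuous_on_arc_gap: "continuous_on Ytot (\<lambda>p. arc_gap (snd p))"
  unfolding arc_gap_def cis_conv_exp by (intro continuous_intros continuous_on_arc_angle)

lemma arc_gap_pole: "x = pole1 \<or> x = pole2 \<Longrightarrow> arc_gap x = 0"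
  by (auto simp: arc_gap_def arc_angle_def pole1_def pole2_def complex_eq_iff)

lemma arc_gap_nonneg: "0 \<le> arc_gap x"
  by (simp add: arc_gap_def)

lemma norm_arc_end_minus_start: "nonpole x \<Longrightarrow> cmod (arc_end x - arc_start x) = arc_gap x"
proof -
  assume x: "nonpole x"
  have "arc_end x - arc_start x = arc_start x * (cis (arc_angle x) - 1)"
    by (simp add: arc_end_def algebra_simps)
  then show ?thesis using nonpole_arc_data(1)[OF x] by (simp add: norm_mult arc_gap_def)
qed

lemma Ln_divide_of_Re_pos:
  assumes "0 < Re p1" "0 < Re p2"
  shows "Ln (p1/p2) = Ln p1 - Ln p2"
proof -
  have n: "p1 \<noteq> 0" "p2 \<noteq> 0" using assms by auto
  have li: "Ln (inverse p2) = - Ln p2"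
    using Ln_inverse assms(2) by (simp add: complex_nonpos_Reals_iff)
  have "\<bar>Arg p1\<bar> < pi/2" "\<bar>Arg p2\<bar> < pi/2" using Arg_Re_pos assms by auto
  moreover have "Im (Ln p1) = Arg p1" "Im (Ln p2) = Arg p2" using Arg_eq_Im_Ln n by auto
  ultimately have "Ln (p1 * inverse p2) = Ln p1 + Ln (inverse p2)"
    by (intro Ln_times_simple) (use n li in auto)
  then show ?thesis using li by (simp add: divide_inverse)
qed

text \<open>Writing \<open>hmeasure_holo 0\<close> through the logarithm of a single quotient, which tends to 1
  at the poles, gives its continuity there.\<close>

definition hmeasure_quot :: "complex \<times> (complex \<times> real) \<Rightarrow> complex" where
  "hmeasure_quot p = (1 - fst p / arc_end (snd p)) / (1 - fst p / arc_start (snd p))"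

lemma hmeasure_quot_pole: "fst (snd p) = 0 \<Longrightarrow> hmeasure_quot p = 1"
  by (simp add: hmeasure_quot_def arc_end_def arc_start_def)

lemma hmeasure_quot_factors_Re_pos:
  assumes "p \<in> Ytot" "nonpole (snd p)"
  shows "0 < Re (1 - fst p / arc_end (snd p))" "0 < Re (1 - fst p / arc_start (snd p))"
  using one_minus_div_Re_pos nonpole_arc_data[OF assms(2)] assms(1) by (auto simp: Ytot_iff)

lemma hmeasure_holo_0_eq_Ln:
  assumes p: "p \<in> Ytot"
  shows "hmeasure_holo 0 p = of_real (arc_angle (snd p)/(2*pi)) + Ln (hmeasure_quot p) / (\<i> * of_real pi)"
  using p
proof (cases rule: Ytot_cases)
  case nonpole
  then show ?thesis
    unfolding hmeasure_quot_def Ln_divide_of_Re_pos[OF hmeasure_quot_factors_Re_pos[OF p nonpole]]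
    by simp
next
  case pole
  then show ?thesis using hmeasure_quot_pole[of p] by (simp add: arc_start_def arc_end_def)
qed

lemma hmeasure_quot_not_nonpos_Reals:
  assumes p: "p \<in> Ytot"
  shows "hmeasure_quot p \<notin> \<real>\<^sub>\<le>\<^sub>0"
  using p
proof (cases rule: Ytot_cases)
  case nonpole
  define p1 p2 where "p1 = 1 - fst p / arc_end (snd p)" and "p2 = 1 - fst p / arc_start (snd p)"
  have r: "0 < Re p1" "0 < Re p2"
    unfolding p1_def p2_def using hmeasure_quot_factors_Re_pos[OF p nonpole] by auto
  show ?thesis
  proof
    assume "hmeasure_quot p \<in> \<real>\<^sub>\<le>\<^sub>0"
    then obtain r0 where r0: "hmeasure_quot p = of_real r0" "r0 \<le> 0"
      by (auto simp: nonpos_Reals_def)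
    have "p2 \<noteq> 0" using r by auto
    then have "Re p1 = r0 * Re p2"
      using r0 unfolding hmeasure_quot_def p1_def[symmetric] p2_def[symmetric]
        by (simp add: field_simps)
    moreover have "r0 * Re p2 \<le> 0" using r0(2) r(2) by (simp add: mult_nonpos_nonneg)
    ultimately show False using r(1) by simp
  qed
next
  case pole
  then show ?thesis using hmeasure_quot_pole[of p] by simp
qed

lemma norm_hmeasure_quot_minus_1_le:
  assumes p: "p \<in> Ytot"
  shows "cmod (hmeasure_quot p - 1) \<le> arc_gap (snd p) / (1 - cmod (fst p))"
  using p
proof (cases rule: Ytot_cases)
  case nonpole
  define z a b where "z = fst p" and "a = arc_start (snd p)" and "b = arc_end (snd p)"
  have z: "cmod z < 1" using p by (simp add: Ytot_iff z_def)
  have ua: "cmod a = 1" and ub: "cmod b = 1" using nonpole_arc_data[OF nonpole]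
    by (auto simp: a_def b_def)
  then have "a \<noteq> 0" "b \<noteq> 0" "a - z \<noteq> 0" using z by auto
  then have "hmeasure_quot p - 1 = z * (b - a) / (b * (a - z))"
    unfolding hmeasure_quot_def z_def[symmetric] a_def[symmetric] b_def[symmetric]
      by (simp add: field_simps)
  then have "cmod (hmeasure_quot p - 1) = cmod z * cmod (b - a) / cmod (a - z)"
    using ub by (simp add: norm_mult norm_divide)
  also have "\<dots> \<le> cmod (b - a) / cmod (a - z)" using z
    by (simp add: divide_right_mono mult_left_le_one_le)
  also have "\<dots> \<le> cmod (b - a) / (1 - cmod z)"
    using ua z norm_triangle_ineq2[of a z] by (simp add: frac_le)
  also have "cmod (b - a) = arc_gap (snd p)" using norm_arc_end_minus_start[OF nonpole]
    by (simp add: a_def b_def)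
  finally show ?thesis unfolding z_def .
next
  case pole
  then show ?thesis using hmeasure_quot_pole[OF pole(1)] p arc_gap_nonneg[of "snd p"]
    by (simp add: Ytot_iff)
qed

lemma continuous_on_hmeasure_quot: "continuous_on Ytot hmeasure_quot"
proof (rule continuous_on_open_Int_extend[OF open_off_poles])
  have "arc_start (snd p) \<noteq> 0" "arc_end (snd p) \<noteq> 0" "1 - fst p / arc_start (snd p) \<noteq> 0"
    if "p \<in> Ytot \<inter> off_poles" for p
    using nonpole_arc_data[OF nonpole_of_off_poles[OF that]]
      hmeasure_quot_factors_Re_pos[OF _ nonpole_of_off_poles[OF that]] that by auto
  then show "continuous_on (Ytot \<inter> off_poles) hmeasure_quot"
    unfolding hmeasure_quot_def
      by (intro continuous_intros continuous_on_arc_start continuous_on_arc_end) auto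
next
  fix p assume p: "p \<in> Ytot" "p \<notin> off_poles"
  then have pole: "snd p = pole1 \<or> snd p = pole2"
    using X1_fst_eq_0_imp_pole by (auto simp: Ytot_iff off_poles_def)
  show "(hmeasure_quot \<longlongrightarrow> hmeasure_quot p) (at p within Ytot)"
  proof (rule tendsto_within_of_norm_le[where h = "\<lambda>q. arc_gap (snd q) / (1 - cmod (fst q))"])
    show "continuous_on Ytot (\<lambda>q. arc_gap (snd q) / (1 - cmod (fst q)))"
      by (intro continuous_intros continuous_on_arc_gap) (auto simp: Ytot_iff)
  qed (use p pole norm_hmeasure_quot_minus_1_le hmeasure_quot_pole arc_gap_pole in
      \<open>auto simp: off_poles_def\<close>)
qed

lemma continuous_on_hmeasure_holo_0: "continuous_on Ytot (hmeasure_holo 0)"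
proof -
  have "continuous_on Ytot (\<lambda>p. of_real (arc_angle (snd p)/(2*pi)) + Ln (hmeasure_quot p) / (\<i> * of_real pi))"
    by (intro continuous_intros continuous_on_arc_angle continuous_on_Ln' continuous_on_hmeasure_quot)
      (use hmeasure_quot_not_nonpos_Reals in auto)
  then show ?thesis by (rule continuous_on_eq) (rule hmeasure_holo_0_eq_Ln[symmetric])
qed

lemma norm_power_diff_le:
  fixes A B :: complex
  assumes "cmod A \<le> 2" "cmod B \<le> 2"
  shows "cmod (A^k - B^k) \<le> 2^k * real k * cmod (A - B)"
proof -
  have "cmod ((A/2)^k - (B/2)^k) \<le> real k * cmod (A/2 - B/2)"
    by (rule norm_power_diff) (use assms in \<open>auto simp: norm_divide\<close>)
  also have "cmod (A/2 - B/2) = cmod (A - B) / 2"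
    by (simp add: diff_divide_distrib[symmetric] norm_divide)
  finally have le: "cmod ((A/2)^k - (B/2)^k) \<le> real k * (cmod (A - B) / 2)" .
  have "A^k - B^k = 2^k * ((A/2)^k - (B/2)^k)" by (simp add: power_divide algebra_simps)
  then have "cmod (A^k - B^k) = 2^k * cmod ((A/2)^k - (B/2)^k)" by (simp add: norm_mult norm_power)
  also have "\<dots> \<le> 2^k * (real k * (cmod (A - B) / 2))" using le by simp
  also have "\<dots> \<le> 2^k * real k * cmod (A - B)" by simp
  finally show ?thesis .
qed

lemma norm_inverse_power_diff_le:
  fixes A B :: complex
  assumes "cmod A \<le> 2" "cmod B \<le> 2" "0 < d" "d \<le> cmod A" "d \<le> cmod B"
  shows "cmod (1/B^k - 1/A^k) \<le> 2^k * real k * cmod (A - B) / d^(2*k)"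
proof -
  have "A \<noteq> 0" "B \<noteq> 0" using assms by auto
  then have "1/B^k - 1/A^k = (A^k - B^k) / (A^k * B^k)" by (simp add: field_simps)
  moreover have "d^k * d^k \<le> cmod A ^ k * cmod B ^ k"
    using assms by (intro mult_mono power_mono) auto
  then have "d^(2*k) \<le> cmod (A^k * B^k)" by (simp add: norm_mult norm_power mult_2 power_add)
  moreover have "0 < d^(2*k)" using assms by simp
  ultimately have "cmod (1/B^k - 1/A^k) \<le> cmod (A^k - B^k) / d^(2*k)"
    by (simp add: norm_divide frac_le)
  also have "\<dots> \<le> 2^k * real k * cmod (A - B) / d^(2*k)"
    using norm_power_diff_le[OF assms(1,2)] \<open>0 < d^(2*k)\<close> by (simp add: divide_right_mono)
  finally show ?thesis .
qed

lemma norm_hmeasure_holo_Suc_le: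
  assumes p: "p \<in> Ytot"
  shows "cmod (hmeasure_holo (Suc m) p)
    \<le> fact m / pi * (2^(Suc m) * real (Suc m) * arc_gap (snd p) / (1 - cmod (fst p))^(2*Suc m))"
  using p
proof (cases rule: Ytot_cases)
  case nonpole
  define z a b where "z = fst p" and "a = arc_start (snd p)" and "b = arc_end (snd p)"
  have z: "cmod z < 1" using p by (simp add: Ytot_iff z_def)
  have ua: "cmod a = 1" and ub: "cmod b = 1" using nonpole_arc_data[OF nonpole]
    by (auto simp: a_def b_def)
  have d: "1 - cmod z \<le> cmod (a - z)" "1 - cmod z \<le> cmod (b - z)"
    using ua ub norm_triangle_ineq2[of a z] norm_triangle_ineq2[of b z] by auto
  have le2: "cmod (a - z) \<le> 2" "cmod (b - z) \<le> 2"
    using ua ub z norm_triangle_ineq4[of a z] norm_triangle_ineq4[of b z] by auto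
  have "cmod ((a - z) - (b - z)) = arc_gap (snd p)"
    using norm_arc_end_minus_start[OF nonpole] by (simp add: a_def b_def norm_minus_commute)
  moreover have "0 < 1 - cmod z" using z by simp
  ultimately have "fact m / pi * cmod (1/(b - z)^(Suc m) - 1/(a - z)^(Suc m))
      \<le> fact m / pi * (2^(Suc m) * real (Suc m) * arc_gap (snd p) / (1 - cmod z)^(2*Suc m))"
    using norm_inverse_power_diff_le[OF le2 _ d, of "Suc m"] by (intro mult_left_mono) auto
  moreover have "cmod (hmeasure_holo (Suc m) p) = fact m / pi * cmod (1/(b - z)^(Suc m) - 1/(a - z)^(Suc m))"
    by (simp add: z_def a_def b_def norm_mult norm_divide)
  ultimately show ?thesis unfolding z_def by simp
next
  case pole
  then show ?thesis
    using hmeasure_holo_pole(2)[OF pole(2), of m "fst p"] p arc_gap_nonneg[of "snd p"]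
    by (simp add: Ytot_iff)
qed

lemma continuous_on_hmeasure_holo_Suc: "continuous_on Ytot (hmeasure_holo (Suc m))"
proof (rule continuous_on_open_Int_extend[OF open_off_poles])
  have "arc_end (snd p) - fst p \<noteq> 0" "arc_start (snd p) - fst p \<noteq> 0" if "p \<in> Ytot \<inter> off_poles" for p
    using nonpole_arc_data[OF nonpole_of_off_poles[OF that]] that by (auto simp: Ytot_iff)
  then have "continuous_on (Ytot \<inter> off_poles) (\<lambda>p. - of_real (fact m) / (\<i> * of_real pi)
      * (1/(arc_end (snd p) - fst p)^(Suc m) - 1/(arc_start (snd p) - fst p)^(Suc m)))"
    by (intro continuous_intros continuous_on_arc_start continuous_on_arc_end) auto
  then show "continuous_on (Ytot \<inter> off_poles) (hmeasure_holo (Suc m))" by simp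
next
  fix p assume p: "p \<in> Ytot" "p \<notin> off_poles"
  then have "snd p = pole1 \<or> snd p = pole2"
    using X1_fst_eq_0_imp_pole by (auto simp: Ytot_iff off_poles_def)
  then have zero: "hmeasure_holo (Suc m) p = 0" "arc_gap (snd p) = 0"
    using hmeasure_holo_pole(2)[of "snd p" m "fst p"] arc_gap_pole by auto
  define h where
    "h q = fact m / pi * (2^(Suc m) * real (Suc m) * arc_gap (snd q) / (1 - cmod (fst q))^(2*Suc m))"
    for q
  show "(hmeasure_holo (Suc m) \<longlongrightarrow> hmeasure_holo (Suc m) p) (at p within Ytot)"
  proof (rule tendsto_within_of_norm_le[where h = h])
    show "continuous_on Ytot h"
      unfolding h_def by (intro continuous_intros continuous_on_arc_gap) (auto simp: Ytot_iff)
  qed (use p zero norm_hmeasure_holo_Suc_le in \<open>auto simp: h_def\<close>)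
qed

lemma continuous_on_hmeasure_holo: "continuous_on Ytot (hmeasure_holo n)"
  using continuous_on_hmeasure_holo_0 continuous_on_hmeasure_holo_Suc by (cases n) auto


section \<open>Squares of leafwise harmonic functions\<close>

lemma eventually_leaf_line_in_Ytot:
  assumes p: "p \<in> Ytot" and e: "cmod e = 1"
  shows "\<forall>\<^sub>F t in nhds 0. (fst p + e * of_real t, snd p) \<in> Ytot"
proof -
  have "(fst p + e * of_real t, snd p) \<in> Ytot" if "dist t 0 < 1 - cmod (fst p)" for t :: real
  proof -
    have "cmod (fst p + e * of_real t) \<le> cmod (fst p) + \<bar>t\<bar>"
      using norm_triangle_ineq[of "fst p" "e * of_real t"] e by (simp add: norm_mult)
    then show ?thesis using that p by (simp add: Ytot_iff)
  qed
  moreover have "0 < 1 - cmod (fst p)" using p by (simp add: Ytot_iff)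
  ultimately show ?thesis unfolding eventually_nhds_metric by blast
qed

text \<open>The leafwise
  derivatives of \<open>(Re (Phi 0))\<^sup>2\<close> are sums of products \<open>Re (c * Phi n) * Re (d * Phi m)\<close>,
  encoded as lists of tuples \<open>(c, n, d, m)\<close>; such sums are closed under differentiation in
  any direction \<open>e\<close>, which gives all iterated leafwise derivatives at once.\<close>

type_synonym prod_terms = "(complex \<times> nat \<times> complex \<times> nat) list"

locale leafwise_holomorphic_tower =
  fixes Phi :: "nat \<Rightarrow> complex \<times> (complex \<times> real) \<Rightarrow> complex"
  assumes has_field_derivative_Phi:
      "p \<in> Ytot \<Longrightarrow> ((\<lambda>w. Phi n (w, snd p)) has_field_derivative Phi (Suc n) p) (at (fst p))"
    and continuous_on_Phi: "continuous_on Ytot (Phi n)"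
begin

definition eval_terms :: "prod_terms \<Rightarrow> complex \<times> (complex \<times> real) \<Rightarrow> real" where
  "eval_terms L p = (\<Sum>(c, n, d, m) \<leftarrow> L. Re (c * Phi n p) * Re (d * Phi m p))"

definition deriv_terms :: "complex \<Rightarrow> prod_terms \<Rightarrow> prod_terms" where
  "deriv_terms e L = concat (map (\<lambda>(c, n, d, m). [(c * e, Suc n, d, m), (c, n, d * e, Suc m)]) L)"

primrec ldiff_terms :: "bool list \<Rightarrow> prod_terms" where
  "ldiff_terms [] = [(1, 0, 1, 0)]"
| "ldiff_terms (b # ws) = deriv_terms (ldir b) (ldiff_terms ws)"

lemma has_real_derivative_Re_Phi:
  assumes "p \<in> Ytot"
  shows "((\<lambda>t. Re (c * Phi n (fst p + e * of_real t, snd p)))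
    has_real_derivative Re (c * e * Phi (Suc n) p)) (at 0)"
proof -
  have g: "((\<lambda>w. fst p + e * w) has_field_derivative e) (at 0)"
    by (auto intro!: derivative_eq_intros)
  have "((\<lambda>w. Phi n (w, snd p)) has_field_derivative Phi (Suc n) p) (at (fst p + e * 0))"
    using has_field_derivative_Phi[OF assms] by simp
  from DERIV_chain2[OF this g]
  have "((\<lambda>w. c * Phi n (fst p + e * w, snd p))
      has_field_derivative c * (Phi (Suc n) p * e)) (at (of_real 0))"
    by (intro DERIV_cmult) simp
  then have "((\<lambda>t. c * Phi n (fst p + e * of_real t, snd p))
      has_vector_derivative c * (Phi (Suc n) p * e)) (at 0)"
    by (rule has_vector_derivative_real_field)
  then show ?thesis using has_field_derivative_Re by (fastforce simp: mult_ac)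
qed

lemma has_real_derivative_eval_terms:
  assumes "p \<in> Ytot"
  shows "((\<lambda>t. eval_terms L (fst p + e * of_real t, snd p))
    has_real_derivative eval_terms (deriv_terms e L) p) (at 0)"
proof (induction L)
  case Nil then show ?case by (simp add: eval_terms_def deriv_terms_def)
next
  case (Cons tm L)
  obtain c n d m where tm: "tm = (c, n, d, m)" by (cases tm) blast
  have "((\<lambda>t. Re (c * Phi n (fst p + e * of_real t, snd p)) * Re (d * Phi m (fst p + e * of_real t, snd p))
        + eval_terms L (fst p + e * of_real t, snd p)) has_real_derivative
      Re (c * e * Phi (Suc n) p) * Re (d * Phi m p) + Re (d * e * Phi (Suc m) p) * Re (c * Phi n p)
        + eval_terms (deriv_terms e L) p) (at 0)"
    using DERIV_add[OF DERIV_mult[OF has_real_derivative_Re_Phi[OF assms] has_real_derivative_Re_Phi[OF assms]]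
        Cons.IH]
    by simp
  then show ?case unfolding tm by (simp add: eval_terms_def deriv_terms_def algebra_simps)
qed

lemma continuous_on_eval_terms: "continuous_on Ytot (eval_terms L)"
  unfolding eval_terms_def
  by (induction L) (auto intro!: continuous_intros continuous_on_Phi simp: case_prod_unfold)

lemma ldiff_eq_eval_terms:
  assumes F: "\<forall>q\<in>Ytot. F q = (Re (Phi 0 q))^2" and "p \<in> Ytot"
  shows "ldiff ws F p = eval_terms (ldiff_terms ws) p"
  using \<open>p \<in> Ytot\<close>
proof (induction ws arbitrary: p)
  case Nil then show ?case using F by (simp add: eval_terms_def power2_eq_square)
next
  case (Cons b ws)
  have "cmod (ldir b) = 1" by (simp add: ldir_def)
  from eventually_leaf_line_in_Ytot[OF Cons.prems this]
  have "\<forall>\<^sub>F t in nhds 0. ldiff ws F (fst p + ldir b * of_real t, snd p)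
      = eval_terms (ldiff_terms ws) (fst p + ldir b * of_real t, snd p)"
    by (rule eventually_mono) (rule Cons.IH)
  then have "deriv (\<lambda>t. ldiff ws F (fst p + ldir b * of_real t, snd p)) 0
      = deriv (\<lambda>t. eval_terms (ldiff_terms ws) (fst p + ldir b * of_real t, snd p)) 0"
    by (rule deriv_cong_ev) simp
  also have "\<dots> = eval_terms (ldiff_terms (b # ws)) p"
    using DERIV_imp_deriv[OF has_real_derivative_eval_terms[OF Cons.prems]] by simp
  finally show ?case by simp
qed

lemma leaf_smooth_Re_squared:
  assumes F: "\<forall>q\<in>Ytot. F q = (Re (Phi 0 q))^2"
  shows "leaf_smooth F"
  unfolding leaf_smooth_def
proof (intro allI conjI ballI)
  fix ws
  show "continuous_on Ytot (ldiff ws F)"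
    using continuous_on_eval_terms by (rule continuous_on_eq) (simp add: ldiff_eq_eval_terms[OF F])
  fix b p assume p: "p \<in> Ytot"
  have "cmod (ldir b) = 1" by (simp add: ldir_def)
  from eventually_leaf_line_in_Ytot[OF p this]
  have ev: "\<forall>\<^sub>F t in nhds 0. eval_terms (ldiff_terms ws) (fst p + ldir b * of_real t, snd p)
      = ldiff ws F (fst p + ldir b * of_real t, snd p)"
    by (rule eventually_mono) (rule ldiff_eq_eval_terms[OF F, symmetric])
  have "((\<lambda>t. ldiff ws F (fst p + ldir b * of_real t, snd p)) has_real_derivative
      eval_terms (deriv_terms (ldir b) (ldiff_terms ws)) p) (at 0)"
    using has_real_derivative_eval_terms[OF p] DERIV_cong_ev[OF refl ev refl] by blast
  then show "(\<lambda>t. ldiff ws F (fst p + ldir b * of_real t, snd p)) differentiable at 0"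
    by (rule differentiableI[OF has_field_derivative_imp_has_derivative])
qed

lemma hlap_Re_squared:
  assumes F: "\<forall>q\<in>Ytot. F q = (Re (Phi 0 q))^2" and p: "p \<in> Ytot"
  shows "hlap F p = (1 - (cmod (fst p))^2)^2 / 2 * (cmod (Phi (Suc 0) p))^2"
proof -
  have "ldiff [True, True] F p + ldiff [False, False] F p
      = eval_terms (ldiff_terms [True, True]) p + eval_terms (ldiff_terms [False, False]) p"
    using ldiff_eq_eval_terms[OF F p, of "[True, True]"] ldiff_eq_eval_terms[OF F p, of "[False, False]"]
    by (simp only:)
  also have "\<dots> = 2 * ((Re (Phi (Suc 0) p))^2 + (Im (Phi (Suc 0) p))^2)"
    by (simp add: eval_terms_def deriv_terms_def ldir_def power2_eq_square algebra_simps)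
  also have "\<dots> = 2 * (cmod (Phi (Suc 0) p))^2" by (simp add: cmod_power2)
  finally show ?thesis unfolding hlap_def by simp
qed

end

lemma leafwise_holomorphic_tower_hmeasure_holo: "leafwise_holomorphic_tower hmeasure_holo"
  by unfold_locales (use has_field_derivative_hmeasure_holo continuous_on_hmeasure_holo in auto)


section \<open>The gradient of the harmonic measure\<close>

definition hmeasure_grad :: "complex \<times> (complex \<times> real) \<Rightarrow> real" where
  "hmeasure_grad p = (1 - (cmod (fst p))^2) * cmod (hmeasure_holo (Suc 0) p)"

lemma norm_hmeasure_holo_1:
  assumes "nonpole (snd p)" "cmod (fst p) < 1"
  shows "cmod (hmeasure_holo (Suc 0) p)
    = cmod (arc_end (snd p) - arc_start (snd p))
      / (pi * cmod (arc_end (snd p) - fst p) * cmod (arc_start (snd p) - fst p))"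
proof -
  define z a b where "z = fst p" and "a = arc_start (snd p)" and "b = arc_end (snd p)"
  have "a - z \<noteq> 0" "b - z \<noteq> 0"
    using norm_1_sub_nonzero nonpole_arc_data[OF assms(1)] assms(2)
      by (auto simp: a_def b_def z_def)
  then have "1/(b - z) - 1/(a - z) = (a - b) / ((b - z) * (a - z))" by (simp add: field_simps)
  then have "hmeasure_holo (Suc 0) p = - 1 / (\<i> * of_real pi) * ((a - b) / ((b - z) * (a - z)))"
    by (simp add: a_def b_def z_def)
  then show ?thesis
    by (simp add: norm_mult norm_divide a_def[symmetric] b_def[symmetric] z_def[symmetric] norm_minus_commute)
qed

lemma hmeasure_grad_density_mob:
  assumes g: "g \<in> su11" and z: "cmod z < 1" and a: "cmod a = 1" and b: "cmod b = 1"
  shows "(1 - (cmod (mob g z))^2)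
      * (cmod (mob g b - mob g a) / (pi * cmod (mob g b - mob g z) * cmod (mob g a - mob g z)))
    = (1 - (cmod z)^2) * (cmod (b - a) / (pi * cmod (b - z) * cmod (a - z)))"
proof -
  have D: "mob_denom g z \<noteq> 0" "mob_denom g a \<noteq> 0" "mob_denom g b \<noteq> 0"
    using mob_denom_nonzero g z a b by auto
  have alg: "(w / Z^2) * ((dba / (B * A)) / (pi * (dbz / (B * Z)) * (daz / (A * Z))))
      = w * (dba / (pi * dbz * daz))" if "A \<noteq> 0" "B \<noteq> 0" "Z \<noteq> 0" for A B Z w dba dbz daz :: real
    using that pi_gt_zero by (simp add: field_simps power2_eq_square)
  show ?thesis
    unfolding one_minus_norm_mob_squared[OF g D(1)] mob_diff[OF g D(3) D(2)] mob_diff[OF g D(3) D(1)]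
      mob_diff[OF g D(2) D(1)] norm_divide norm_mult
    by (rule alg) (use D in auto)
qed

lemma su11_invariant_hmeasure_grad: "su11_invariant hmeasure_grad"
  unfolding su11_invariant_def
proof (intro ballI)
  fix g p assume g: "g \<in> su11" and p: "p \<in> Ytot"
  from p show "hmeasure_grad (mob g (fst p), arcact g (snd p)) = hmeasure_grad p"
  proof (cases rule: Ytot_cases)
    case nonpole
    note data = nonpole_arc_data[OF nonpole]
    have z: "cmod (fst p) < 1" using p by (simp add: Ytot_iff)
    show ?thesis
      unfolding hmeasure_grad_def norm_hmeasure_holo_1[OF nonpole z]
        norm_hmeasure_holo_1[of "(mob g (fst p), arcact g (snd p))", unfolded fst_conv snd_conv,
          OF arcact_nonpole(1)[OF g nonpole] norm_mob_less_1[OF g z]]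
        arcact_nonpole[OF g nonpole] fst_conv
      by (rule hmeasure_grad_density_mob[OF g z data(1,2)])
  next
    case pole
    then have "arcact g (snd p) = snd p" by auto
    moreover have zero: "hmeasure_holo (Suc 0) (w, snd p) = 0" for w
      by (rule hmeasure_holo_pole(2)[OF pole(2)])
    moreover have "hmeasure_holo (Suc 0) p = 0" using zero[of "fst p"] by simp
    ultimately show ?thesis by (simp add: hmeasure_grad_def del: hmeasure_holo.simps)
  qed
qed

lemma hmeasure_grad_nonneg: "p \<in> Ytot \<Longrightarrow> 0 \<le> hmeasure_grad p"
  unfolding hmeasure_grad_def by (simp add: Ytot_iff abs_square_le_1 less_imp_le)

lemma hmeasure_grad_pos:
  assumes p: "p \<in> Ytot" and x: "nonpole (snd p)"
  shows "0 < hmeasure_grad p"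
proof -
  have z: "cmod (fst p) < 1" using p by (simp add: Ytot_iff)
  note data = nonpole_arc_data[OF x]
  have "cis (arc_angle (snd p)) \<noteq> cis 0" using cis_inj_on_0_2pi[of "arc_angle (snd p)" 0] data
    by auto
  then have "arc_end (snd p) - arc_start (snd p) \<noteq> 0" using data by (auto simp: arc_end_def)
  moreover have "arc_end (snd p) - fst p \<noteq> 0" "arc_start (snd p) - fst p \<noteq> 0"
    using norm_1_sub_nonzero data z by auto
  ultimately have "0 < cmod (hmeasure_holo (Suc 0) p)" using norm_hmeasure_holo_1[OF x z] by simp
  then show ?thesis unfolding hmeasure_grad_def using z by (simp add: abs_square_less_1)
qed

lemma hmeasure_grad_eq_0_iff:
  assumes p: "p \<in> Ytot"
  shows "hmeasure_grad p = 0 \<longleftrightarrow> snd p = pole1 \<or> snd p = pole2"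
  using p
proof (cases rule: Ytot_cases)
  case nonpole
  then show ?thesis using hmeasure_grad_pos[OF p] by (auto simp: nonpole_def)
next
  case pole
  have "hmeasure_holo (Suc 0) (fst p, snd p) = 0" by (rule hmeasure_holo_pole(2)[OF pole(2)])
  then show ?thesis using pole by (simp add: hmeasure_grad_def del: hmeasure_holo.simps)
qed

text \<open>By invariance it suffices to bound the gradient at \<open>z = 0\<close>, where it is \<open>|b - a|/\<pi>\<close>.\<close>

lemma hmeasure_grad_le:
  assumes p: "p \<in> Ytot"
  shows "hmeasure_grad p \<le> 2 / pi"
proof -
  obtain z x where pz: "p = (z, x)" by (cases p) blast
  have z: "cmod z < 1" and x: "x \<in> X1" using p pz by (auto simp: Ytot_iff)
  define s where "s = sqrt (1 - (cmod z)^2)"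
  have z2: "(cmod z)^2 < 1" using z by (simp add: abs_square_less_1)
  then have s: "0 < s" "s^2 = 1 - (cmod z)^2" by (simp_all add: s_def)
  define g0 where "g0 = (1 / complex_of_real s, - z / complex_of_real s)"
  have "(cmod (1 / complex_of_real s))^2 - (cmod (- z / complex_of_real s))^2 = (1 - (cmod z)^2) / s^2"
    using s(1) by (simp add: norm_divide power_divide diff_divide_distrib)
  also have "\<dots> = 1" using s z2 by simp
  finally have g0: "g0 \<in> su11" by (simp add: su11_def g0_def)
  have "mob g0 z = 0" by (simp add: mob_def g0_def)
  then have "hmeasure_grad p = hmeasure_grad (0, arcact g0 x)"
    using su11_invariant_hmeasure_grad g0 p pz unfolding su11_invariant_def by force
  also have "\<dots> \<le> 2 / pi"
    using arcact_X1[OF g0 x]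
  proof (cases rule: X1_cases)
    case nonpole
    note data = nonpole_arc_data[OF nonpole]
    have "cmod (arc_end (arcact g0 x) - arc_start (arcact g0 x)) \<le> 2"
      using norm_triangle_ineq4[of "arc_end (arcact g0 x)" "arc_start (arcact g0 x)"] data by simp
    then show ?thesis
      unfolding hmeasure_grad_def using norm_hmeasure_holo_1[of "(0, arcact g0 x)"] nonpole data
      by (simp add: divide_right_mono del: hmeasure_holo.simps)
  next
    case pole
    then have "hmeasure_holo (Suc 0) (0, arcact g0 x) = 0" using hmeasure_holo_pole(2) by blast
    then show ?thesis by (simp add: hmeasure_grad_def del: hmeasure_holo.simps)
  qed
  finally show ?thesis .
qed

lemma continuous_on_hmeasure_grad: "continuous_on Ytot hmeasure_grad"
  unfolding hmeasure_grad_def by (intro continuous_intros continuous_on_hmeasure_holo)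


section \<open>Harmonic measures live on the compact leaves\<close>

lemma Mlift_borel_measurable:
  fixes f :: "complex \<times> (complex \<times> real) \<Rightarrow> real"
  assumes G: "su11_subgroup G" and f: "invariant G f" "continuous_on Ytot f"
    and m: "space m = Mspace G" "sets m = sigma_sets (Mspace G) {U. openin (Mtop G) U}"
  shows "Mlift f \<in> borel_measurable m"
proof (rule borel_measurableI)
  fix S :: "real set" assume "open S"
  then have "openin (Mtop G) {c \<in> Mspace G. Mlift f c \<in> S}" by (rule openin_Mlift_preimage[OF G f])
  moreover have "Mlift f -` S \<inter> space m = {c \<in> Mspace G. Mlift f c \<in> S}" using m(1) by auto
  ultimately show "Mlift f -` S \<inter> space m \<in> sets m" using m(2) by (auto intro: sigma_sets.Basic)
qed

lemma msupport_subset_Mlift_eq_0: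
  fixes f :: "complex \<times> (complex \<times> real) \<Rightarrow> real"
  assumes G: "su11_subgroup G"
    and m: "finite_measure m" "space m = Mspace G" "sets m = sigma_sets (Mspace G) {U. openin (Mtop G) U}"
    and f: "invariant G f" "continuous_on Ytot f" "\<And>p. p \<in> Ytot \<Longrightarrow> 0 \<le> f p \<and> f p \<le> B"
    and int0: "integral\<^sup>L m (Mlift f) = 0"
  shows "msupport G m \<subseteq> {c. Mlift f c = 0}"
proof
  fix c assume c: "c \<in> msupport G m"
  have bounds: "0 \<le> Mlift f d \<and> Mlift f d \<le> B" if "d \<in> space m" for d
  proof -
    have "(SOME p. p \<in> d \<inter> Ytot) \<in> Ytot" using some_in_Mspace(1)[OF G] that m(2) by simp
    then show ?thesis unfolding Mlift_def using f(3) by blast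
  qed
  have meas: "Mlift f \<in> borel_measurable m" by (rule Mlift_borel_measurable[OF G f(1,2) m(2,3)])
  have "integrable m (Mlift f)"
    by (rule finite_measure.integrable_const_bound[OF m(1), where B = B]) (use bounds meas in auto)
  from integral_nonneg_eq_0_iff_AE[OF this] have "AE d in m. Mlift f d = 0"
    using int0 bounds by auto
  then have ae: "AE d in m. \<not> Mlift f d \<in> {0<..}" by (rule eventually_mono) auto
  define U where "U = {d \<in> Mspace G. Mlift f d \<in> {0<..}}"
  have U: "openin (Mtop G) U" unfolding U_def by (rule openin_Mlift_preimage[OF G f(1,2)]) simp
  then have "U \<in> sets m" using m(3) by (auto intro: sigma_sets.Basic)
  moreover have "{d \<in> space m. \<not> \<not> Mlift f d \<in> {0<..}} = U" using m(2) by (simp add: U_def)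
  ultimately have "emeasure m U = 0" using AE_iff_measurable[of U m] ae by simp
  moreover have cM: "c \<in> Mspace G" and pos: "c \<in> U \<Longrightarrow> 0 < emeasure m U"
    using c U by (auto simp: msupport_def)
  ultimately have "c \<notin> U" by auto
  then show "c \<in> {c. Mlift f c = 0}" using bounds[of c] cM m(2) by (simp add: U_def)
qed

lemma continuous_on_hmeasure: "continuous_on Ytot hmeasure"
  using continuous_on_Re[OF continuous_on_hmeasure_holo[of 0]]
  by (rule continuous_on_eq) (use Re_hmeasure_holo_0 in auto)

text \<open>The leafwise Laplacian of \<open>hmeasure\<^sup>2\<close>.\<close>

definition hmeasure_energy :: "complex \<times> (complex \<times> real) \<Rightarrow> real" where
  "hmeasure_energy p = (hmeasure_grad p)^2 / 2"

lemma invariant_hmeasure_energy: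
  assumes "su11_subgroup G"
  shows "invariant G hmeasure_energy"
  using su11_invariant_imp_invariant[OF assms su11_invariant_hmeasure_grad]
  by (simp add: invariant_def hmeasure_energy_def)

lemma continuous_on_hmeasure_energy: "continuous_on Ytot hmeasure_energy"
  unfolding hmeasure_energy_def by (auto intro!: continuous_intros continuous_on_hmeasure_grad)

lemma hmeasure_energy_bounds: "p \<in> Ytot \<Longrightarrow> 0 \<le> hmeasure_energy p \<and> hmeasure_energy p \<le> 2 / pi^2"
  using hmeasure_grad_le[of p] hmeasure_grad_nonneg[of p] power_mono[of "hmeasure_grad p" "2/pi" 2]
  by (simp add: hmeasure_energy_def power_divide)

lemma harmonic_measure_integral_hmeasure_energy:
  assumes G: "su11_subgroup G" and m: "harmonic_measure G m"
  shows "integral\<^sup>L m (Mlift hmeasure_energy) = 0"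
proof -
  have inv: "invariant G (\<lambda>p. (hmeasure p)^2)"
    using su11_invariant_imp_invariant[OF G su11_invariant_hmeasure] by (simp add: invariant_def)
  define h where "h = Mlift (\<lambda>p. (hmeasure p)^2)"
  have "continuous_map (Mtop G) euclideanreal h"
    unfolding h_def
      by (intro continuous_map_Mlift[OF G inv] continuous_intros continuous_on_hmeasure)
  moreover have hF: "\<forall>q\<in>Ytot. (h \<circ> Mproj G) q = (Re (hmeasure_holo 0 q))^2"
    using Mlift_Mproj[OF G inv] Re_hmeasure_holo_0 by (simp add: h_def)
  moreover note tower = leafwise_holomorphic_tower_hmeasure_holo
  ultimately have "integral\<^sup>L m (lapM G h) = 0"
    using m leafwise_holomorphic_tower.leaf_smooth_Re_squared[OF tower]
      unfolding harmonic_measure_def by blast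
  moreover have "lapM G h c = Mlift hmeasure_energy c" if "c \<in> space m" for c
  proof -
    have "(SOME p. p \<in> c \<inter> Ytot) \<in> Ytot"
      using some_in_Mspace(1)[OF G] that m by (simp add: harmonic_measure_def)
    then show ?thesis
      unfolding lapM_def Mlift_def hmeasure_energy_def hmeasure_grad_def
      by (simp add: leafwise_holomorphic_tower.hlap_Re_squared[OF tower hF] power_mult_distrib
          del: hmeasure_holo.simps)
  qed
  ultimately show ?thesis by (metis Bochner_Integration.integral_cong)
qed

theorem mainTheorem7:
  fixes \<Gamma> :: "(complex \<times> complex) set"
    and m :: "(complex \<times> (complex \<times> real)) set measure"
  assumes "cocompact_surface_group \<Gamma>"
    and "harmonic_measure \<Gamma> m"
  shows "msupport \<Gamma> m \<subseteq> leafS1 \<Gamma> \<union> leafS2 \<Gamma>"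
proof
  have G: "su11_subgroup \<Gamma>" using assms(1) by (rule cocompact_surface_group_imp_su11_subgroup)
  have "msupport \<Gamma> m \<subseteq> {c. Mlift hmeasure_energy c = 0}"
    using assms(2) unfolding harmonic_measure_def
    by (intro msupport_subset_Mlift_eq_0[OF G _ _ _ invariant_hmeasure_energy[OF G]
          continuous_on_hmeasure_energy hmeasure_energy_bounds
          harmonic_measure_integral_hmeasure_energy[OF G assms(2)]]) auto
  moreover fix c assume c: "c \<in> msupport \<Gamma> m"
  moreover obtain p where p: "p \<in> Ytot" "c = Mproj \<Gamma> p"
    using c by (auto simp: msupport_def Mspace_def)
  ultimately have "hmeasure_grad p = 0"
    using Mlift_Mproj[OF G invariant_hmeasure_energy[OF G] p(1)] by (auto simp: hmeasure_energy_def)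
  then have "snd p = pole1 \<or> snd p = pole2"
    using hmeasure_grad_eq_0_iff[OF p(1)] by simp
  then show "c \<in> leafS1 \<Gamma> \<union> leafS2 \<Gamma>"
    using p by (cases p) (auto simp: leafS1_def leafS2_def Ytot_def)
qed

end
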